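(* Let $\Omega\subset\mathbb{R}^n$, $n\in\mathbb{N}$, be a bounded smooth domain. Let $\alpha\ge0$, $\kappa\ge0$, $T\in(0,\infty]$, and let the nonnegative functions $u,v\in C^0(\overline\Omega\times[0,T))\cap C^{2,1}(\overline\Omega\times(0,T))$ solve \[ u_t=\Delta u-\nabla\cdot\Big(\frac{u}{(1+u)^\alpha}\nabla v\Big)-uw+\kappa-u,\qquad v_t=\Delta v+uw-v\qquad\text{in }\Omega\times(0,T), \] with $\partial_\nu u=\partial_\nu v=\partial_\nu w=0$ on $\partial\Omega\times(0,T)$, for some function $w$. Then \[ \int_\Omega v(\cdot,t)\le e^{-t}\Big(\int_\Omega u(\cdot,0)+\int_\Omega v(\cdot,0)\Big)+\kappa|\Omega|(1-e^{-t})\qquad\text{for all }t\in(0,T). \]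
   Context: $\nu$ denotes the outward unit normal on $\partial\Omega$, $\partial_\nu=\nu\cdot\nabla$, and $|\Omega|$ is the Lebesgue measure of $\Omega$. *)

theory Defs
  imports "HOL-Analysis.Analysis"
begin

definition pdiff :: "'n::finite \<Rightarrow> (real^'n \<Rightarrow> real) \<Rightarrow> real^'n \<Rightarrow> real" where
  "pdiff i f x = frechet_derivative f (at x) (axis i 1)"

fun pdiff_iter :: "'n::finite list \<Rightarrow> (real^'n \<Rightarrow> real) \<Rightarrow> real^'n \<Rightarrow> real" where
  "pdiff_iter [] f = f"
| "pdiff_iter (i # is) f = pdiff i (pdiff_iter is f)"

definition C_infinity :: "(real^'n::finite \<Rightarrow> real) \<Rightarrow> bool" where
  "C_infinity f \<longleftrightarrow> (\<forall>is. (\<forall>x. pdiff_iter is f differentiable (at x)) \<and> continuous_on UNIV (pdiff_iter is f))"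

definition grad :: "(real^'n::finite \<Rightarrow> real) \<Rightarrow> real^'n \<Rightarrow> real^'n" where
  "grad f x = (\<chi> i. pdiff i f x)"

definition divg :: "(real^'n::finite \<Rightarrow> real^'n) \<Rightarrow> real^'n \<Rightarrow> real" where
  "divg F x = (\<Sum>i\<in>UNIV. frechet_derivative F (at x) (axis i 1) $ i)"

definition lap :: "(real^'n::finite \<Rightarrow> real) \<Rightarrow> real^'n \<Rightarrow> real" where
  "lap f x = divg (grad f) x"

definition defining_function :: "(real^'n::finite) set \<Rightarrow> (real^'n \<Rightarrow> real) \<Rightarrow> bool" where
  "defining_function \<Omega> \<phi> \<longleftrightarrow> C_infinity \<phi> \<and> \<Omega> = {x. \<phi> x < 0} \<and>
      (\<forall>x. \<phi> x = 0 \<longrightarrow> grad \<phi> x \<noteq> 0)"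

definition bounded_smooth_domain :: "(real^'n::finite) set \<Rightarrow> bool" where
  "bounded_smooth_domain \<Omega> \<longleftrightarrow> \<Omega> \<noteq> {} \<and> open \<Omega> \<and> connected \<Omega> \<and> bounded \<Omega> \<and>
      (\<exists>\<phi>. defining_function \<Omega> \<phi>)"

(* outward unit normal on the boundary (independent of the chosen defining function) *)
definition outward_normal :: "(real^'n::finite) set \<Rightarrow> real^'n \<Rightarrow> real^'n" where
  "outward_normal \<Omega> x = (let \<phi> = (SOME \<phi>. defining_function \<Omega> \<phi>) in
      grad \<phi> x /\<^sub>R norm (grad \<phi> x))"

definition cyl_closed0 :: "(real^'n::finite) set \<Rightarrow> ereal \<Rightarrow> ((real^'n) \<times> real) set" where
  "cyl_closed0 \<Omega> T = {(x,t). x \<in> closure \<Omega> \<and> 0 \<le> t \<and> ereal t < T}"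

definition cyl_closed :: "(real^'n::finite) set \<Rightarrow> ereal \<Rightarrow> ((real^'n) \<times> real) set" where
  "cyl_closed \<Omega> T = {(x,t). x \<in> closure \<Omega> \<and> 0 < t \<and> ereal t < T}"

definition cyl_open :: "(real^'n::finite) set \<Rightarrow> ereal \<Rightarrow> ((real^'n) \<times> real) set" where
  "cyl_open \<Omega> T = {(x,t). x \<in> \<Omega> \<and> 0 < t \<and> ereal t < T}"

definition C21 :: "(real^'n::finite) set \<Rightarrow> ereal \<Rightarrow> (real^'n \<Rightarrow> real \<Rightarrow> real) \<Rightarrow> bool" where
  "C21 \<Omega> T u \<longleftrightarrow>
     (\<forall>(x,t)\<in>cyl_open \<Omega> T.
        (\<lambda>y. u y t) differentiable (at x) \<and>
        (\<forall>i. pdiff i (\<lambda>y. u y t) differentiable (at x)) \<and>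
        (\<lambda>s. u x s) differentiable (at t)) \<and>
     (\<exists>U. continuous_on (cyl_closed \<Omega> T) U \<and> (\<forall>(x,t)\<in>cyl_open \<Omega> T. U (x,t) = u x t)) \<and>
     (\<forall>i. \<exists>U. continuous_on (cyl_closed \<Omega> T) U \<and>
        (\<forall>(x,t)\<in>cyl_open \<Omega> T. U (x,t) = pdiff i (\<lambda>y. u y t) x)) \<and>
     (\<forall>i j. \<exists>U. continuous_on (cyl_closed \<Omega> T) U \<and>
        (\<forall>(x,t)\<in>cyl_open \<Omega> T. U (x,t) = pdiff j (pdiff i (\<lambda>y. u y t)) x)) \<and>
     (\<exists>U. continuous_on (cyl_closed \<Omega> T) U \<and>
        (\<forall>(x,t)\<in>cyl_open \<Omega> T. U (x,t) = deriv (\<lambda>s. u x s) t))"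

definition normal_deriv :: "(real^'n::finite) set \<Rightarrow> (real^'n \<Rightarrow> real \<Rightarrow> real) \<Rightarrow> real^'n \<Rightarrow> real \<Rightarrow> real" where
  "normal_deriv \<Omega> u x t = Lim (at x within \<Omega>) (\<lambda>y. grad (\<lambda>z. u z t) y) \<bullet> outward_normal \<Omega> x"

end

theory Submission
  imports Defs
begin

text \<open>Adding the two equations, the reaction terms \<open>\<plusminus>uw\<close> cancel. The Laplacians and the
  chemotactic flux integrate to zero over \<open>\<Omega>\<close> by the homogeneous Neumann conditions, so the
  total mass \<open>y(t) = \<integral>\<^sub>\<Omega> u + v\<close> solves \<open>y' = \<kappa>|\<Omega>| - y\<close>; hence
  \<open>y(t) = e\<^sup>-\<^sup>t y(0) + \<kappa>|\<Omega>|(1 - e\<^sup>-\<^sup>t)\<close>, which bounds \<open>\<integral>\<^sub>\<Omega> v\<close> because \<open>u \<ge> 0\<close>.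

  Lacking a surface measure, the vanishing of \<open>\<integral>\<^sub>\<Omega> div F\<close> for a field whose normal
  component vanishes on \<open>\<partial>\<Omega>\<close> is proved with the cutoffs \<open>h(\<phi>/\<epsilon>)\<close>, where \<open>\<phi>\<close> is a
  defining function of \<open>\<Omega>\<close> and \<open>h\<close> a \<open>C\<^sup>1\<close> step. Integrating \<open>div (h(\<phi>/\<epsilon>) F)\<close> is exact,
  as this field has compact support in \<open>\<Omega>\<close>; as \<open>\<epsilon> \<rightarrow> 0\<close>, dominated convergence recovers
  \<open>\<integral>\<^sub>\<Omega> div F\<close>, while the boundary-layer term \<open>\<integral> h'(\<phi>/\<epsilon>)/\<epsilon> F\<cdot>\<nabla>\<phi>\<close> tends to \<open>0\<close>
  because \<open>|\<nabla>\<phi>|\<close> is bounded below and \<open>F\<cdot>\<nabla>\<phi>\<close> is small near \<open>\<partial>\<Omega>\<close>.\<close>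

section \<open>A \<open>C\<^sup>1\<close> step function\<close>

definition cutoff :: "real \<Rightarrow> real" where
  "cutoff s = (if s \<le> -2 then 1 else if s \<ge> -1 then 0 else 1 - 3*(s+2)^2 + 2*(s+2)^3)"

definition cutoff' :: "real \<Rightarrow> real" where
  "cutoff' s = (if s \<le> -2 \<or> s \<ge> -1 then 0 else 6*(s+2)^2 - 6*(s+2))"

lemma has_real_derivative_paste:
  fixes f g h :: "real \<Rightarrow> real"
  assumes "(g has_real_derivative D) (at x)" "(h has_real_derivative D) (at x)" "d > 0"
    and "\<And>y. x - d < y \<Longrightarrow> y \<le> x \<Longrightarrow> f y = g y"
    and "\<And>y. x \<le> y \<Longrightarrow> y < x + d \<Longrightarrow> f y = h y"
  shows "(f has_real_derivative D) (at x)"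
proof -
  have "((\<lambda>y. (g y - g x) / (y - x)) \<longlongrightarrow> D) (at_left x)"
    using assms(1) unfolding has_field_derivative_iff by (rule filterlim_mono) (auto simp: at_le)
  then have left: "((\<lambda>y. (f y - f x) / (y - x)) \<longlongrightarrow> D) (at_left x)"
    by (rule Lim_transform_eventually)
      (use assms(3,4) in \<open>auto simp: eventually_at_left_field intro!: exI[of _ "x - d"]\<close>)
  have "((\<lambda>y. (h y - h x) / (y - x)) \<longlongrightarrow> D) (at_right x)"
    using assms(2) unfolding has_field_derivative_iff by (rule filterlim_mono) (auto simp: at_le)
  then have right: "((\<lambda>y. (f y - f x) / (y - x)) \<longlongrightarrow> D) (at_right x)"
    by (rule Lim_transform_eventually)
      (use assms(3,5) in \<open>auto simp: eventually_at_right_field intro!: exI[of _ "x + d"]\<close>)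
  show ?thesis
    unfolding has_field_derivative_iff using left right by (simp add: filterlim_at_split)
qed

lemma cutoff_has_derivative: "(cutoff has_real_derivative cutoff' s) (at s)"
proof -
  let ?p = "\<lambda>s::real. 1 - 3*(s+2)^2 + 2*(s+2)^3"
  have p: "(?p has_real_derivative 6*(s+2)^2 - 6*(s+2)) (at s)" for s
    by (auto intro!: derivative_eq_intros simp: algebra_simps power2_eq_square)
  consider "s < -2" | "s = -2" | "-2 < s \<and> s < -1" | "s = -1" | "s > -1" by linarith
  then show ?thesis
  proof cases
    case 1
    show ?thesis
      by (rule has_field_derivative_transform_within_open[of "\<lambda>_. 1" _ _ "{..<-2}"])
        (use 1 in \<open>auto simp: cutoff_def cutoff'_def\<close>)
  next
    case 2
    show ?thesis
      by (rule has_real_derivative_paste[where g="\<lambda>_. 1" and h= ?p and d="1/2"])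
        (use p[of s] 2 in \<open>auto simp: cutoff_def cutoff'_def\<close>)
  next
    case 3
    show ?thesis
      by (rule has_field_derivative_transform_within_open[of ?p _ _ "{-2<..<-1}"])
        (use p[of s] 3 in \<open>auto simp: cutoff_def cutoff'_def\<close>)
  next
    case 4
    show ?thesis
      by (rule has_real_derivative_paste[where g= ?p and h="\<lambda>_. 0" and d="1/2"])
        (use p[of s] 4 in \<open>auto simp: cutoff_def cutoff'_def\<close>)
  next
    case 5
    show ?thesis
      by (rule has_field_derivative_transform_within_open[of "\<lambda>_. 0" _ _ "{-1<..}"])
        (use 5 in \<open>auto simp: cutoff_def cutoff'_def\<close>)
  qed
qed

lemma cutoff_scaled_has_derivative:
  "((\<lambda>s. cutoff (s / \<epsilon>)) has_real_derivative cutoff' (s / \<epsilon>) / \<epsilon>) (at s)"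
  using DERIV_chain2[OF cutoff_has_derivative DERIV_cdivide[OF DERIV_ident, of \<epsilon> s]] by simp

lemma continuous_on_cutoff: "continuous_on S cutoff"
  using cutoff_has_derivative by (meson DERIV_isCont continuous_at_imp_continuous_on)

lemma continuous_on_cutoff': "continuous_on S cutoff'"
proof -
  have clamp: "cutoff' = (\<lambda>s. 6*(s+2)^2 - 6*(s+2)) \<circ> (\<lambda>s. max (-2) (min (-1) s))"
    by (auto simp: fun_eq_iff cutoff'_def max_def min_def)
  show ?thesis
    unfolding clamp by (intro continuous_on_compose continuous_intros)
qed

lemma cutoff_nonneg: "0 \<le> cutoff s" and cutoff_le_1: "cutoff s \<le> 1"
proof -
  have "0 \<le> 1 - 3*t^2 + 2*t^3 \<and> 1 - 3*t^2 + 2*t^3 \<le> 1" if "0 < t" "t < 1" for t :: real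
  proof -
    have "1 - 3*t^2 + 2*t^3 = (1 - t)^2 * (1 + 2*t)" "3*t^2 - 2*t^3 = t^2 * (3 - 2*t)"
      by (simp_all add: algebra_simps power2_eq_square power3_eq_cube)
    with that show ?thesis
      by (smt (verit) mult_nonneg_nonneg zero_le_power2)
  qed
  from this[of "s + 2"] show "0 \<le> cutoff s" "cutoff s \<le> 1"
    by (auto simp: cutoff_def)
qed

lemma cutoff'_nonpos: "cutoff' s \<le> 0"
proof -
  have "(s+2)^2 \<le> s+2" if "-2 < s" "s < -1"
    using that by (simp add: power2_eq_square mult_le_cancel_right1)
  then show ?thesis by (auto simp: cutoff'_def)
qed

lemma cutoff_eq_1: "s \<le> -2 \<Longrightarrow> cutoff s = 1"
  and cutoff_eq_0: "-1 \<le> s \<Longrightarrow> cutoff s = 0"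
  and cutoff'_eq_0: "s \<le> -2 \<or> -1 \<le> s \<Longrightarrow> cutoff' s = 0"
  by (auto simp: cutoff_def cutoff'_def)

section \<open>Partial derivatives\<close>

lemma pdiff_eq_derivative:
  assumes "(f has_derivative f') (at x)"
  shows "pdiff i f x = f' (axis i 1)"
  using frechet_derivative_at[OF assms] unfolding pdiff_def by simp

lemma grad_component [simp]: "grad f x $ i = pdiff i f x"
  by (simp add: grad_def)

lemma pdiff_const [simp]: "pdiff i (\<lambda>_. c) x = 0"
  by (metis pdiff_eq_derivative has_derivative_const)

lemma pdiff_transform_within_open:
  assumes "f differentiable (at x)" "open S" "x \<in> S" "\<And>y. y \<in> S \<Longrightarrow> f y = g y"
  shows "pdiff i g x = pdiff i f x"
  using frechet_derivative_transform_within_open[OF assms] unfolding pdiff_def by simp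

lemma differentiable_transform_within_open:
  assumes "f differentiable (at x)" "open S" "x \<in> S" "\<And>y. y \<in> S \<Longrightarrow> f y = g y"
  shows "g differentiable (at x)"
  using assms has_derivative_transform_within_open unfolding differentiable_def by blast

lemma pdiff_mult:
  assumes "f differentiable (at x)" "g differentiable (at x)"
  shows "pdiff i (\<lambda>y. f y * g y) x = pdiff i f x * g x + f x * pdiff i g x"
proof -
  obtain f' g' where f': "(f has_derivative f') (at x)" and g': "(g has_derivative g') (at x)"
    using assms unfolding differentiable_def by blast
  show ?thesis
    using pdiff_eq_derivative[OF has_derivative_mult[OF f' g']]
      pdiff_eq_derivative[OF f'] pdiff_eq_derivative[OF g'] by simp
qed

lemma pdiff_compose_real:
  assumes "(h has_real_derivative h') (at (f x))" "f differentiable (at x)"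
  shows "pdiff i (\<lambda>y. h (f y)) x = h' * pdiff i f x"
proof -
  obtain f' where f': "(f has_derivative f') (at x)"
    using assms(2) unfolding differentiable_def by blast
  have "((\<lambda>y. h (f y)) has_derivative (\<lambda>v. h' * f' v)) (at x)"
    using has_derivative_compose[OF f' assms(1)[unfolded has_field_derivative_def]]
    by (simp add: o_def mult.commute)
  with f' show ?thesis by (simp add: pdiff_eq_derivative)
qed

lemma differentiable_compose_real:
  assumes "(h has_real_derivative h') (at (f x))" "f differentiable (at x)"
  shows "(\<lambda>y. h (f y)) differentiable (at x)"
  using differentiable_compose[OF differentiableI[OF has_field_derivative_imp_has_derivative[OF assms(1)]] assms(2)] .

lemma differentiable_vec_nth:
  fixes F :: "real^'n::finite \<Rightarrow> real^'n"
  assumes "F differentiable (at x)"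
  shows "(\<lambda>y. F y $ i) differentiable (at x)"
proof -
  obtain F' where "(F has_derivative F') (at x)"
    using assms unfolding differentiable_def by blast
  from bounded_linear.has_derivative[OF bounded_linear_vec_nth this] show ?thesis
    by (rule differentiableI)
qed

lemma differentiable_vec_lambda:
  fixes f :: "'n::finite \<Rightarrow> real^'m \<Rightarrow> real"
  assumes "\<And>i. f i differentiable (at x)"
  shows "(\<lambda>y. \<chi> i. f i y) differentiable (at x)"
proof -
  have sum: "(\<lambda>y. \<chi> i. f i y) = (\<lambda>y. \<Sum>i\<in>UNIV. f i y *\<^sub>R axis i (1::real))"
    by (auto simp: vec_eq_iff axis_def if_distrib cong: if_cong)
  show ?thesis
    unfolding sum by (rule differentiable_sum) (auto intro!: differentiable_scaleR assms)
qed

lemma divg_eq_sum_pdiff: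
  fixes F :: "real^'n::finite \<Rightarrow> real^'n"
  assumes "F differentiable (at x)"
  shows "divg F x = (\<Sum>i\<in>UNIV. pdiff i (\<lambda>y. F y $ i) x)"
proof -
  obtain F' where F': "(F has_derivative F') (at x)"
    using assms unfolding differentiable_def by blast
  have component: "((\<lambda>y. F y $ i) has_derivative (\<lambda>v. F' v $ i)) (at x)" for i
    using bounded_linear.has_derivative[OF bounded_linear_vec_nth F'] .
  show ?thesis
    by (simp add: divg_def pdiff_eq_derivative[OF component] frechet_derivative_at[OF F', symmetric])
qed

lemma grad_differentiable:
  assumes "\<And>i. pdiff i f differentiable (at x)"
  shows "grad f differentiable (at x)"
  unfolding grad_def[abs_def] by (rule differentiable_vec_lambda[OF assms])

lemma lap_eq_sum_pdiff:
  assumes "\<And>i. pdiff i f differentiable (at x)"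
  shows "lap f x = (\<Sum>i\<in>UNIV. pdiff i (pdiff i f) x)"
  unfolding lap_def divg_eq_sum_pdiff[OF grad_differentiable[OF assms]] by simp

section \<open>Integrals of partial derivatives and of continuous functions\<close>

lemma integral_cbox_supported:
  fixes f :: "real^'n::finite \<Rightarrow> real"
  assumes "f integrable_on cbox a b" "\<And>x. x \<notin> cbox a b \<Longrightarrow> f x = 0" "cbox a b \<subseteq> cbox c d"
  shows "integral (cbox c d) f = integral (cbox a b) f"
  using has_integral_on_superset[OF integrable_integral[OF assms(1)] assms(2,3)]
  by (simp add: integral_unique)

lemma integral_translate_supported:
  fixes f :: "real^'n::finite \<Rightarrow> real"
  assumes "continuous_on UNIV f" "\<And>x. x \<notin> cbox a b \<Longrightarrow> f x = 0"
    and "cbox a b \<subseteq> cbox (c + h) (d + h)"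
  shows "integral (cbox c d) (\<lambda>x. f (x + h)) = integral (cbox a b) f"
proof -
  have "integral (cbox c d) (\<lambda>x. f (x + h)) = integral (cbox (c + h) (d + h)) f"
    using integral_shift_cbox_plus[of c d f h] by (simp add: o_def add.commute)
  also have "\<dots> = integral (cbox a b) f"
    using assms by (intro integral_cbox_supported integrable_continuous)
      (auto intro: continuous_on_subset)
  finally show ?thesis .
qed

lemma pdiff_eq_0_outside:
  assumes "closed K" "\<And>y. y \<notin> K \<Longrightarrow> g y = 0" "x \<notin> K"
  shows "pdiff i g x = 0"
proof -
  have "pdiff i g x = pdiff i (\<lambda>_. 0) x"
    by (rule pdiff_transform_within_open[of _ _ "- K"]) (use assms in auto)
  then show ?thesis by simp
qed

lemma has_vector_derivative_along_axis:
  assumes "g differentiable (at (x + s *\<^sub>R axis i 1))"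
  shows "((\<lambda>s. g (x + s *\<^sub>R axis i 1)) has_vector_derivative pdiff i g (x + s *\<^sub>R axis i 1))
           (at s within S)"
proof -
  obtain D where D: "(g has_derivative D) (at (x + s *\<^sub>R axis i 1))"
    using assms unfolding differentiable_def by blast
  have "((\<lambda>s. g (x + s *\<^sub>R axis i 1)) has_derivative (\<lambda>h. D (h *\<^sub>R axis i 1))) (at s within S)"
    by (rule has_derivative_compose[where f="\<lambda>s. x + s *\<^sub>R axis i 1",
          OF _ has_derivative_at_withinI[OF D]]) (auto intro!: derivative_eq_intros)
  moreover have "D (h *\<^sub>R axis i 1) = h *\<^sub>R pdiff i g (x + s *\<^sub>R axis i 1)" for h
    using pdiff_eq_derivative[OF D] has_derivative_linear[OF D] by (simp add: linear_scale)
  ultimately show ?thesis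
    unfolding has_vector_derivative_def by simp
qed

lemma cbox_subset_slide:
  fixes a b :: "real^'n::finite"
  assumes "0 \<le> s" "s \<le> 1"
  shows "cbox a b \<subseteq> cbox (a - 1 + s *\<^sub>R axis i 1) (b + s *\<^sub>R axis i 1)"
proof -
  have "0 \<le> s * axis i 1 $ j" "s * axis i 1 $ j \<le> 1" for j
    using assms by (auto simp: axis_def)
  then show ?thesis
  proof (clarsimp simp: subset_eq mem_box_cart)
    fix x j assume "\<forall>j. a $ j \<le> x $ j \<and> x $ j \<le> b $ j"
    then have "a $ j \<le> x $ j" "x $ j \<le> b $ j" by auto
    with \<open>0 \<le> s * axis i 1 $ j\<close> \<open>s * axis i 1 $ j \<le> 1\<close>
    show "a $ j - 1 + s * axis i 1 $ j \<le> x $ j \<and> x $ j \<le> b $ j + s * axis i 1 $ j"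
      by linarith
  qed
qed

text \<open>By translation invariance, the integral of \<open>\<partial>\<^sub>i g\<close> over a box is unchanged when the
  box slides along \<open>e\<^sub>i\<close>; averaging over the slide and using the fundamental theorem of
  calculus along each line turns it into a difference of two translates of \<open>g\<close>.\<close>

lemma has_integral_pdiff_compact_support:
  fixes g :: "real^'n::finite \<Rightarrow> real"
  assumes diff: "\<And>x. g differentiable (at x)"
    and cont: "continuous_on UNIV (pdiff i g)"
    and supp: "\<And>x. x \<notin> cbox a b \<Longrightarrow> g x = 0"
  shows "(pdiff i g has_integral 0) UNIV"
proof -
  define e :: "real^'n" where "e = axis i 1"
  define B where "B = cbox (a - 1) b"
  have g_cont: "continuous_on UNIV g"
    using diff by (simp add: differentiable_imp_continuous_within continuous_at_imp_continuous_on)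
  have pdiff_supp: "pdiff i g x = 0" if "x \<notin> cbox a b" for x
    using pdiff_eq_0_outside[OF closed_cbox supp that] .
  define J where "J = integral (cbox a b) (pdiff i g)"
  have translate_J: "integral B (\<lambda>x. pdiff i g (x + s *\<^sub>R e)) = J" if "s \<in> cbox 0 1" for s
    unfolding B_def J_def e_def using that cbox_subset_slide[of s a b i]
    by (intro integral_translate_supported[OF cont pdiff_supp]) auto
  have ftc: "integral (cbox 0 1) (\<lambda>s. pdiff i g (x + s *\<^sub>R e)) = g (x + e) - g x" for x
    using fundamental_theorem_of_calculus[of 0 1 "\<lambda>s. g (x + s *\<^sub>R axis i 1)",
        OF _ has_vector_derivative_along_axis[OF diff]]
    unfolding e_def by (simp add: integral_unique)
  have "J = integral (cbox (0::real) 1) (\<lambda>s. J)"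
    by simp
  also have "\<dots> = integral (cbox 0 1) (\<lambda>s. integral B (\<lambda>x. pdiff i g (x + s *\<^sub>R e)))"
    using translate_J by (intro integral_cong) auto
  also have "\<dots> = integral B (\<lambda>x. integral (cbox 0 1) (\<lambda>s. pdiff i g (x + s *\<^sub>R e)))"
    unfolding B_def
    by (rule integral_swap_continuous[symmetric])
      (auto simp: case_prod_unfold intro!: continuous_on_compose2[OF cont] continuous_intros)
  also have "\<dots> = integral B (\<lambda>x. g (x + e)) - integral B g"
    unfolding ftc B_def
  proof (intro integral_diff integrable_continuous)
    show "continuous_on (cbox (a - 1) b) (\<lambda>x. g (x + e))"
      by (rule continuous_on_compose2[OF g_cont]) (auto intro!: continuous_intros)
  qed (rule continuous_on_subset[OF g_cont subset_UNIV])
  also have "\<dots> = 0"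
  proof -
    have "integral B (\<lambda>x. g (x + 1 *\<^sub>R e)) = integral (cbox a b) g"
      unfolding B_def e_def using cbox_subset_slide[of 1 a b i]
      by (intro integral_translate_supported[OF g_cont supp]) auto
    moreover have "integral B g = integral (cbox a b) g"
      unfolding B_def using cbox_subset_slide[of 0 a b i]
      by (intro integral_cbox_supported[OF integrable_continuous supp])
        (auto intro: continuous_on_subset[OF g_cont])
    ultimately show ?thesis by simp
  qed
  finally have "J = 0" .
  moreover have "(pdiff i g has_integral J) (cbox a b)"
    unfolding J_def by (intro integrable_integral integrable_continuous continuous_on_subset[OF cont]) simp
  ultimately show ?thesis
    using has_integral_on_superset[OF _ pdiff_supp subset_UNIV] by simp
qed

lemma has_integral_pdiff_vanishing_near_frontier:
  fixes h :: "real^'n::finite \<Rightarrow> real"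
  assumes "bounded \<Omega>" "open \<Omega>" "open V" "\<Omega> \<union> V = UNIV"
    and h_diff: "\<And>x. x \<in> \<Omega> \<Longrightarrow> h differentiable (at x)"
    and h_cont: "continuous_on \<Omega> (pdiff i h)"
    and h_zero: "\<And>x. x \<in> \<Omega> \<inter> V \<Longrightarrow> h x = 0"
  shows "(pdiff i h has_integral 0) \<Omega>"
proof -
  define g where "g x = (if x \<in> \<Omega> then h x else 0)" for x
  have g_eq: "\<And>y. y \<in> \<Omega> \<Longrightarrow> h y = g y"
    by (simp add: g_def)
  have diff_\<Omega>: "g differentiable (at x)" and pdiff_\<Omega>: "pdiff i g x = pdiff i h x" if "x \<in> \<Omega>" for x
    using differentiable_transform_within_open[OF h_diff[OF that] \<open>open \<Omega>\<close> that g_eq]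
      pdiff_transform_within_open[OF h_diff[OF that] \<open>open \<Omega>\<close> that g_eq] by simp_all
  have zero: "\<And>y. y \<in> V \<Longrightarrow> (\<lambda>_. 0) y = g y"
    using h_zero by (simp add: g_def)
  have diff_V: "g differentiable (at x)" and pdiff_V: "pdiff i g x = 0" if "x \<in> V" for x
    using differentiable_transform_within_open[OF differentiable_const \<open>open V\<close> that zero]
      pdiff_transform_within_open[OF differentiable_const \<open>open V\<close> that zero] by simp_all
  have "continuous_on (\<Omega> \<union> V) (pdiff i g)"
  proof (rule continuous_on_open_Un[OF \<open>open \<Omega>\<close> \<open>open V\<close>])
    show "continuous_on \<Omega> (pdiff i g)"
      by (rule continuous_on_eq[OF h_cont]) (simp add: pdiff_\<Omega>)
    show "continuous_on V (pdiff i g)"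
      by (rule continuous_on_eq[OF continuous_on_const]) (simp add: pdiff_V)
  qed
  then have pdiff_g_cont: "continuous_on UNIV (pdiff i g)"
    using \<open>\<Omega> \<union> V = UNIV\<close> by simp
  obtain a b where "\<Omega> \<subseteq> cbox a b"
    using \<open>bounded \<Omega>\<close> bounded_subset_cbox_symmetric by metis
  then have g_supp: "g x = 0" if "x \<notin> cbox a b" for x
    using that by (auto simp: g_def)
  have g_diff: "g differentiable (at x)" for x
    using diff_\<Omega> diff_V \<open>\<Omega> \<union> V = UNIV\<close> by blast
  have "(pdiff i g has_integral 0) UNIV"
    by (rule has_integral_pdiff_compact_support[OF g_diff pdiff_g_cont g_supp])
  moreover have "pdiff i g = (\<lambda>x. if x \<in> \<Omega> then pdiff i h x else 0)"
    using pdiff_\<Omega> pdiff_V \<open>\<Omega> \<union> V = UNIV\<close> by (auto simp: fun_eq_iff)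
  ultimately show ?thesis
    by (simp add: has_integral_restrict_UNIV)
qed

lemma integrable_on_continuous_closure:
  fixes f :: "real^'n::finite \<Rightarrow> real"
  assumes "bounded S" "open S" "continuous_on (closure S) f"
  shows "f integrable_on S"
proof -
  have "integrable lborel (\<lambda>x. indicator (closure S) x *\<^sub>R f x)"
    using assms by (intro borel_integrable_compact) (auto simp: compact_closure)
  then have "f absolutely_integrable_on closure S"
    unfolding set_integrable_def using integrable_completion borel_measurable_integrable by blast
  moreover have "S \<in> sets lebesgue"
    using lmeasurable_open[OF assms(1,2)] by (simp add: fmeasurableD)
  ultimately have "f absolutely_integrable_on S"
    by (rule set_integrable_subset) (rule closure_subset)
  then show ?thesis
    by (simp add: absolutely_integrable_on_def)
qed

lemma has_integral_const_measure:
  fixes S :: "(real^'n::finite) set"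
  assumes "bounded S" "open S"
  shows "((\<lambda>x. c) has_integral c * measure lebesgue S) S"
proof -
  have "((\<lambda>x. 1::real) has_integral measure lebesgue S) S"
    unfolding lmeasure_integral[OF lmeasurable_open[OF assms]]
    by (intro integrable_integral integrable_on_continuous_closure assms continuous_on_const)
  from has_integral_mult_left[OF this, of c] show ?thesis by (simp add: mult.commute)
qed

lemma norm_integral_le_measure:
  fixes f :: "real^'n::finite \<Rightarrow> real"
  assumes "bounded S" "open S" "f integrable_on S" "\<And>x. x \<in> S \<Longrightarrow> norm (f x) \<le> e"
  shows "norm (integral S f) \<le> e * measure lebesgue S"
proof -
  have "norm (integral S f) \<le> integral S (\<lambda>x. e)"
    using has_integral_const_measure[OF assms(1,2)]
    by (intro integral_norm_bound_integral[OF assms(3) _ assms(4)]) blast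
  then show ?thesis
    using integral_unique[OF has_integral_const_measure[OF assms(1,2)]] by simp
qed

lemma compact_positive_lower_bound:
  fixes f :: "'a::metric_space \<Rightarrow> real"
  assumes "compact K" "continuous_on K f" "\<And>x. x \<in> K \<Longrightarrow> 0 < f x"
  shows "\<exists>c>0. \<forall>x\<in>K. c < f x"
proof (cases "K = {}")
  case True
  then show ?thesis by (intro exI[of _ 1]) simp
next
  case False
  obtain y where y: "y \<in> K" "\<And>x. x \<in> K \<Longrightarrow> f y \<le> f x"
    using continuous_attains_inf[OF assms(1) False assms(2)] by blast
  have "0 < f y" using assms(3)[OF y(1)] .
  then show ?thesis
    using y(2) by (intro exI[of _ "f y / 2"]) fastforce
qed

section \<open>Domains given by a defining function\<close>

definition extends_continuously :: "(real^'n::finite) set \<Rightarrow> (real^'n \<Rightarrow> real) \<Rightarrow> bool" where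
  "extends_continuously \<Omega> f \<longleftrightarrow> (\<exists>F. continuous_on (closure \<Omega>) F \<and> (\<forall>x\<in>\<Omega>. F x = f x))"

text \<open>Only the diagonal second derivatives enter the Laplacian, so only they need to extend
  to the boundary.\<close>

definition C2_up_to_boundary :: "(real^'n::finite) set \<Rightarrow> (real^'n \<Rightarrow> real) \<Rightarrow> bool" where
  "C2_up_to_boundary \<Omega> f \<longleftrightarrow>
     (\<forall>x\<in>\<Omega>. f differentiable (at x) \<and> (\<forall>i. pdiff i f differentiable (at x))) \<and>
     (\<forall>i. extends_continuously \<Omega> (pdiff i f)) \<and> (\<forall>i. extends_continuously \<Omega> (pdiff i (pdiff i f)))"

lemma extends_continuously_choice:
  assumes "\<And>i. extends_continuously \<Omega> (f i)"
  shows "\<exists>U. \<forall>i. continuous_on (closure \<Omega>) (U i) \<and> (\<forall>x\<in>\<Omega>. U i x = f i x)"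
proof -
  have "\<forall>i. \<exists>U. continuous_on (closure \<Omega>) U \<and> (\<forall>x\<in>\<Omega>. U x = f i x)"
    using assms unfolding extends_continuously_def by blast
  then show ?thesis by (rule choice)
qed

locale level_set_domain =
  fixes \<Omega> :: "(real^'n::finite) set" and \<phi> :: "real^'n \<Rightarrow> real"
  assumes differentiable_phi: "\<And>x. \<phi> differentiable (at x)"
    and differentiable_pdiff_phi: "\<And>x i. pdiff i \<phi> differentiable (at x)"
    and continuous_grad_phi: "continuous_on UNIV (grad \<phi>)"
    and continuous_pdiff2_phi: "\<And>i. continuous_on UNIV (pdiff i (pdiff i \<phi>))"
    and grad_phi_nonzero: "\<And>x. \<phi> x = 0 \<Longrightarrow> grad \<phi> x \<noteq> 0"
    and domain_eq: "\<Omega> = {x. \<phi> x < 0}"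
    and bounded_domain: "bounded \<Omega>"
begin

lemma continuous_phi: "continuous_on S \<phi>"
  using differentiable_phi
  by (meson continuous_at_imp_continuous_on differentiable_imp_continuous_within)

lemma continuous_pdiff_phi: "continuous_on S (pdiff i \<phi>)"
proof -
  have "continuous_on UNIV (\<lambda>x. grad \<phi> x $ i)"
    using continuous_grad_phi by (intro continuous_intros)
  then have "continuous_on UNIV (pdiff i \<phi>)" by simp
  then show ?thesis by (rule continuous_on_subset) simp
qed

lemma continuous_lap_phi: "continuous_on S (lap \<phi>)"
  unfolding lap_eq_sum_pdiff[OF differentiable_pdiff_phi, abs_def]
  using continuous_pdiff2_phi by (intro continuous_intros) (auto intro: continuous_on_subset)

lemma open_domain: "open \<Omega>"
  unfolding domain_eq using continuous_phi by (simp add: open_Collect_less)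

lemma closure_domain_nonpos: "x \<in> closure \<Omega> \<Longrightarrow> \<phi> x \<le> 0"
proof -
  have "closure \<Omega> \<subseteq> {x. \<phi> x \<le> 0}"
    using continuous_phi by (intro closure_minimal) (auto simp: domain_eq closed_Collect_le)
  then show "x \<in> closure \<Omega> \<Longrightarrow> \<phi> x \<le> 0" by blast
qed

lemma frontier_domain: "x \<in> frontier \<Omega> \<longleftrightarrow> x \<in> closure \<Omega> \<and> \<phi> x = 0"
  using closure_domain_nonpos[of x] open_domain
  by (auto simp: frontier_def interior_open domain_eq)

lemma integrable_on_domain:
  fixes f :: "real^'n \<Rightarrow> real"
  assumes "continuous_on (closure \<Omega>) f"
  shows "f integrable_on \<Omega>"
  by (rule integrable_on_continuous_closure[OF bounded_domain open_domain assms])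

lemma continuous_cutoff_phi: "continuous_on S (\<lambda>x. cutoff (\<phi> x / \<epsilon>))"
  and continuous_cutoff'_phi: "continuous_on S (\<lambda>x. cutoff' (\<phi> x / \<epsilon>))"
proof -
  have "continuous_on S (\<lambda>x. \<phi> x * inverse \<epsilon>)"
    by (intro continuous_on_mult_right continuous_phi)
  then show "continuous_on S (\<lambda>x. cutoff (\<phi> x / \<epsilon>))" "continuous_on S (\<lambda>x. cutoff' (\<phi> x / \<epsilon>))"
    unfolding divide_inverse
    by (auto intro: continuous_on_compose2[OF continuous_on_cutoff[of UNIV]]
        continuous_on_compose2[OF continuous_on_cutoff'[of UNIV]])
qed

lemma less_near_frontier:
  fixes f :: "real^'n \<Rightarrow> real"
  assumes "continuous_on (closure \<Omega>) f" "\<And>x. x \<in> frontier \<Omega> \<Longrightarrow> f x < \<theta>"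
  shows "\<exists>\<delta>>0. \<forall>x\<in>closure \<Omega>. - \<delta> < \<phi> x \<longrightarrow> f x < \<theta>"
proof -
  define K where "K = closure \<Omega> \<inter> {x. \<theta> \<le> f x}"
  have "closed K"
    using continuous_closed_preimage[OF assms(1) closed_closure closed_atLeast[of \<theta>]]
    by (simp add: K_def vimage_def Int_def)
  moreover have "bounded K"
    using bounded_domain by (auto simp: K_def intro: bounded_subset bounded_closure)
  ultimately have "compact K" by (simp add: compact_eq_bounded_closed)
  moreover have "continuous_on K (\<lambda>x. - \<phi> x)"
    by (intro continuous_intros continuous_phi)
  moreover have "0 < - \<phi> x" if "x \<in> K" for x
  proof -
    have "x \<in> closure \<Omega>" "\<theta> \<le> f x" using that by (auto simp: K_def)
    then have "x \<notin> frontier \<Omega>" using assms(2) by fastforce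
    with \<open>x \<in> closure \<Omega>\<close> show ?thesis
      using closure_domain_nonpos frontier_domain by fastforce
  qed
  ultimately have "\<exists>\<delta>>0. \<forall>x\<in>K. \<delta> < - \<phi> x"
    by (rule compact_positive_lower_bound)
  then obtain \<delta> where \<delta>: "0 < \<delta>" "\<And>x. x \<in> K \<Longrightarrow> \<delta> < - \<phi> x"
    by blast
  have "f x < \<theta>" if x: "x \<in> closure \<Omega>" "- \<delta> < \<phi> x" for x
  proof (rule ccontr)
    assume "\<not> f x < \<theta>"
    with x(1) have "x \<in> K" by (simp add: K_def)
    with \<delta>(2) x(2) show False by fastforce
  qed
  with \<delta>(1) show ?thesis by blast
qed

lemma has_integral_cutoff_by_parts:
  fixes F :: "real^'n \<Rightarrow> real^'n"
  assumes "0 < \<epsilon>"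
    and F_diff: "\<And>x. x \<in> \<Omega> \<Longrightarrow> F differentiable (at x)"
    and F_cont: "\<And>i. continuous_on \<Omega> (pdiff i (\<lambda>y. F y $ i))"
  shows "((\<lambda>x. cutoff' (\<phi> x / \<epsilon>) / \<epsilon> * (grad \<phi> x \<bullet> F x) + cutoff (\<phi> x / \<epsilon>) * divg F x)
           has_integral 0) \<Omega>"
proof -
  define h where "h i y = cutoff (\<phi> y / \<epsilon>) * F y $ i" for i y
  define Q where "Q i x = cutoff' (\<phi> x / \<epsilon>) / \<epsilon> * pdiff i \<phi> x * F x $ i
    + cutoff (\<phi> x / \<epsilon>) * pdiff i (\<lambda>y. F y $ i) x" for i x
  have cut_diff: "(\<lambda>y. cutoff (\<phi> y / \<epsilon>)) differentiable (at x)" for x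
    by (rule differentiable_compose_real[OF cutoff_scaled_has_derivative differentiable_phi])
  have h_diff: "h i differentiable (at x)" if "x \<in> \<Omega>" for i x
    unfolding h_def using cut_diff differentiable_vec_nth[OF F_diff[OF that]]
    by (rule differentiable_mult)
  have pdiff_h: "pdiff i (h i) x = Q i x" if "x \<in> \<Omega>" for i x
    unfolding h_def Q_def pdiff_mult[OF cut_diff differentiable_vec_nth[OF F_diff[OF that]]]
      pdiff_compose_real[OF cutoff_scaled_has_derivative differentiable_phi]
    by simp
  have "continuous_on \<Omega> F"
    using F_diff by (meson continuous_at_imp_continuous_on differentiable_imp_continuous_within)
  then have "continuous_on \<Omega> (Q i)" for i
    unfolding Q_def
    by (intro continuous_intros continuous_cutoff_phi continuous_cutoff'_phi continuous_pdiff_phi F_cont)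
      (use \<open>0 < \<epsilon>\<close> in auto)
  then have pdiff_h_cont: "continuous_on \<Omega> (pdiff i (h i))" for i
    using pdiff_h continuous_on_eq by metis
  have "(pdiff i (h i) has_integral 0) \<Omega>" for i
  proof (rule has_integral_pdiff_vanishing_near_frontier[OF bounded_domain open_domain _ _
        h_diff pdiff_h_cont])
    show "open {x. - \<epsilon> < \<phi> x}"
      using continuous_phi by (simp add: open_Collect_less)
    show "\<Omega> \<union> {x. - \<epsilon> < \<phi> x} = UNIV"
      using \<open>0 < \<epsilon>\<close> by (auto simp: domain_eq)
    show "h i x = 0" if "x \<in> \<Omega> \<inter> {x. - \<epsilon> < \<phi> x}" for x
      using that \<open>0 < \<epsilon>\<close> by (auto simp: h_def intro!: cutoff_eq_0 simp: field_simps)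
  qed
  then have "(Q i has_integral 0) \<Omega>" for i
    by (rule has_integral_spike_finite[of "{}", rotated 2]) (auto simp: pdiff_h)
  then have "((\<lambda>x. \<Sum>i\<in>UNIV. Q i x) has_integral 0) \<Omega>"
    using has_integral_sum[of UNIV Q "\<lambda>_. 0" \<Omega>] by simp
  then show ?thesis
  proof (rule has_integral_cong[THEN iffD1, rotated])
    fix x assume "x \<in> \<Omega>"
    then show "(\<Sum>i\<in>UNIV. Q i x)
      = cutoff' (\<phi> x / \<epsilon>) / \<epsilon> * (grad \<phi> x \<bullet> F x) + cutoff (\<phi> x / \<epsilon>) * divg F x"
      unfolding Q_def divg_eq_sum_pdiff[OF F_diff[OF \<open>x \<in> \<Omega>\<close>]] inner_vec_def
      by (simp add: sum.distrib sum_distrib_left algebra_simps)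
  qed
qed

lemma cutoff_layer_integral_le:
  assumes "0 < \<epsilon>"
  shows "integral \<Omega> (\<lambda>x. - cutoff' (\<phi> x / \<epsilon>) / \<epsilon> * (grad \<phi> x \<bullet> grad \<phi> x))
           \<le> integral \<Omega> (\<lambda>x. \<bar>lap \<phi> x\<bar>)"
proof -
  have by_parts: "((\<lambda>x. cutoff' (\<phi> x / \<epsilon>) / \<epsilon> * (grad \<phi> x \<bullet> grad \<phi> x)
      + cutoff (\<phi> x / \<epsilon>) * lap \<phi> x) has_integral 0) \<Omega>"
    unfolding lap_def
  proof (rule has_integral_cutoff_by_parts[OF assms])
    show "grad \<phi> differentiable (at x)" for x
      by (rule grad_differentiable[OF differentiable_pdiff_phi])
    show "continuous_on \<Omega> (pdiff i (\<lambda>y. grad \<phi> y $ i))" for i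
      using continuous_on_subset[OF continuous_pdiff2_phi subset_UNIV] by simp
  qed
  have cut_lap: "(\<lambda>x. cutoff (\<phi> x / \<epsilon>) * lap \<phi> x) integrable_on \<Omega>"
    by (intro integrable_on_domain continuous_on_mult continuous_cutoff_phi continuous_lap_phi)
  have layer_eq: "(\<lambda>x. - cutoff' (\<phi> x / \<epsilon>) / \<epsilon> * (grad \<phi> x \<bullet> grad \<phi> x))
      = (\<lambda>x. cutoff (\<phi> x / \<epsilon>) * lap \<phi> x
          - (cutoff' (\<phi> x / \<epsilon>) / \<epsilon> * (grad \<phi> x \<bullet> grad \<phi> x) + cutoff (\<phi> x / \<epsilon>) * lap \<phi> x))"
    by (simp add: fun_eq_iff)
  have "((\<lambda>x. - cutoff' (\<phi> x / \<epsilon>) / \<epsilon> * (grad \<phi> x \<bullet> grad \<phi> x))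
      has_integral integral \<Omega> (\<lambda>x. cutoff (\<phi> x / \<epsilon>) * lap \<phi> x) - 0) \<Omega>"
    unfolding layer_eq by (rule has_integral_diff[OF integrable_integral[OF cut_lap] by_parts])
  then have "integral \<Omega> (\<lambda>x. - cutoff' (\<phi> x / \<epsilon>) / \<epsilon> * (grad \<phi> x \<bullet> grad \<phi> x))
      = integral \<Omega> (\<lambda>x. cutoff (\<phi> x / \<epsilon>) * lap \<phi> x)"
    by (simp only: integral_unique diff_zero)
  also have "\<dots> \<le> integral \<Omega> (\<lambda>x. \<bar>lap \<phi> x\<bar>)"
  proof (rule integral_le[OF cut_lap])
    show "(\<lambda>x. \<bar>lap \<phi> x\<bar>) integrable_on \<Omega>"
      by (intro integrable_on_domain continuous_on_rabs continuous_lap_phi)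
    fix x
    have "cutoff (\<phi> x / \<epsilon>) * lap \<phi> x \<le> cutoff (\<phi> x / \<epsilon>) * \<bar>lap \<phi> x\<bar>"
      by (rule mult_left_mono) (simp_all add: cutoff_nonneg)
    also have "\<dots> \<le> \<bar>lap \<phi> x\<bar>"
      by (rule mult_left_le_one_le) (simp_all add: cutoff_nonneg cutoff_le_1)
    finally show "cutoff (\<phi> x / \<epsilon>) * lap \<phi> x \<le> \<bar>lap \<phi> x\<bar>" .
  qed
  finally show ?thesis .
qed

text \<open>The boundary-layer term of \<open>G\<close> is dominated by a small multiple of the layer term of
  \<open>\<nabla>\<phi>\<close> itself, because \<open>|\<nabla>\<phi>|\<^sup>2\<close> is bounded below and \<open>G \<bullet> \<nabla>\<phi>\<close> is small near the boundary.\<close>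

lemma cutoff_flux_le:
  fixes G :: "real^'n \<Rightarrow> real^'n"
  assumes G_cont: "continuous_on (closure \<Omega>) G" and "0 < \<epsilon>" "0 < c" "0 \<le> \<theta>"
    and layer: "\<And>x. x \<in> closure \<Omega> \<Longrightarrow> - (2 * \<epsilon>) < \<phi> x \<Longrightarrow>
      c < grad \<phi> x \<bullet> grad \<phi> x \<and> \<bar>G x \<bullet> grad \<phi> x\<bar> \<le> \<theta>"
  shows "\<bar>integral \<Omega> (\<lambda>x. cutoff' (\<phi> x / \<epsilon>) / \<epsilon> * (G x \<bullet> grad \<phi> x))\<bar>
           \<le> \<theta> / c * integral \<Omega> (\<lambda>x. \<bar>lap \<phi> x\<bar>)"
proof -
  define a where "a x = - cutoff' (\<phi> x / \<epsilon>) / \<epsilon>" for x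
  have "0 \<le> a x" for x
    using cutoff'_nonpos \<open>0 < \<epsilon>\<close> by (simp add: a_def divide_nonpos_pos)
  have pointwise: "norm (- a x * (G x \<bullet> grad \<phi> x)) \<le> \<theta> / c * (a x * (grad \<phi> x \<bullet> grad \<phi> x))"
    if "x \<in> \<Omega>" for x
  proof (cases "a x = 0")
    case False
    have "- 2 < \<phi> x / \<epsilon>"
    proof (rule ccontr)
      assume "\<not> - 2 < \<phi> x / \<epsilon>"
      then have "cutoff' (\<phi> x / \<epsilon>) = 0" by (intro cutoff'_eq_0) simp
      with False show False by (simp add: a_def)
    qed
    then have "- (2 * \<epsilon>) < \<phi> x"
      using \<open>0 < \<epsilon>\<close> by (simp add: field_simps)
    moreover have "x \<in> closure \<Omega>" using that closure_subset by blast
    ultimately have "c < grad \<phi> x \<bullet> grad \<phi> x" "\<bar>G x \<bullet> grad \<phi> x\<bar> \<le> \<theta>"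
      using layer by auto
    then have "c * \<bar>G x \<bullet> grad \<phi> x\<bar> \<le> (grad \<phi> x \<bullet> grad \<phi> x) * \<theta>"
      by (intro mult_mono) auto
    then have "\<bar>G x \<bullet> grad \<phi> x\<bar> \<le> \<theta> / c * (grad \<phi> x \<bullet> grad \<phi> x)"
      using \<open>0 < c\<close> by (simp add: field_simps mult.commute)
    then have "a x * \<bar>G x \<bullet> grad \<phi> x\<bar> \<le> a x * (\<theta> / c * (grad \<phi> x \<bullet> grad \<phi> x))"
      using \<open>0 \<le> a x\<close> by (rule mult_left_mono)
    also have "\<dots> = \<theta> / c * (a x * (grad \<phi> x \<bullet> grad \<phi> x))"
      by (rule mult.left_commute)
    finally show ?thesis
      using \<open>0 \<le> a x\<close> by (simp add: abs_mult)
  qed simp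
  have a_cont: "continuous_on (closure \<Omega>) a"
    unfolding a_def
    by (intro continuous_on_divide continuous_on_minus continuous_cutoff'_phi continuous_on_const)
      (use \<open>0 < \<epsilon>\<close> in auto)
  have grad_cont: "continuous_on (closure \<Omega>) (grad \<phi>)"
    by (rule continuous_on_subset[OF continuous_grad_phi subset_UNIV])
  have "continuous_on (closure \<Omega>) (\<lambda>x. - a x * (G x \<bullet> grad \<phi> x))"
    "continuous_on (closure \<Omega>) (\<lambda>x. \<theta> / c * (a x * (grad \<phi> x \<bullet> grad \<phi> x)))"
    by (intro continuous_on_mult continuous_on_minus continuous_on_inner continuous_on_const
        a_cont G_cont grad_cont)+
  then have "norm (integral \<Omega> (\<lambda>x. - a x * (G x \<bullet> grad \<phi> x)))
      \<le> integral \<Omega> (\<lambda>x. \<theta> / c * (a x * (grad \<phi> x \<bullet> grad \<phi> x)))"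
    by (intro integral_norm_bound_integral pointwise integrable_on_domain)
  also have "\<dots> = \<theta> / c * integral \<Omega> (\<lambda>x. - cutoff' (\<phi> x / \<epsilon>) / \<epsilon> * (grad \<phi> x \<bullet> grad \<phi> x))"
    by (simp add: a_def)
  also have "\<dots> \<le> \<theta> / c * integral \<Omega> (\<lambda>x. \<bar>lap \<phi> x\<bar>)"
    using cutoff_layer_integral_le[OF \<open>0 < \<epsilon>\<close>] \<open>0 \<le> \<theta>\<close> \<open>0 < c\<close>
    by (intro mult_left_mono) auto
  finally show ?thesis
    by (simp add: a_def)
qed

lemma cutoff_flux_tendsto_0:
  fixes G :: "real^'n \<Rightarrow> real^'n"
  assumes G_cont: "continuous_on (closure \<Omega>) G"
    and no_flux: "\<And>x. x \<in> frontier \<Omega> \<Longrightarrow> G x \<bullet> grad \<phi> x = 0"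
  shows "((\<lambda>\<epsilon>. integral \<Omega> (\<lambda>x. cutoff' (\<phi> x / \<epsilon>) / \<epsilon> * (G x \<bullet> grad \<phi> x))) \<longlongrightarrow> 0)
           (at_right 0)"
proof -
  define C where "C = integral \<Omega> (\<lambda>x. \<bar>lap \<phi> x\<bar>)"
  have "0 \<le> C"
    unfolding C_def
    by (intro integral_nonneg integrable_on_domain continuous_on_rabs continuous_lap_phi) auto
  have grad_cont: "continuous_on S (\<lambda>x. grad \<phi> x \<bullet> grad \<phi> x)" for S
    by (intro continuous_on_inner continuous_on_subset[OF continuous_grad_phi subset_UNIV])
  have "\<exists>c>0. \<forall>x\<in>frontier \<Omega>. c < grad \<phi> x \<bullet> grad \<phi> x"
    using bounded_domain grad_phi_nonzero frontier_domain
    by (intro compact_positive_lower_bound grad_cont) (auto simp: compact_frontier_bounded)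
  then obtain c where "0 < c" and c: "\<And>x. x \<in> frontier \<Omega> \<Longrightarrow> c < grad \<phi> x \<bullet> grad \<phi> x"
    by blast
  have "\<exists>\<delta>>0. \<forall>x\<in>closure \<Omega>. - \<delta> < \<phi> x \<longrightarrow> - (grad \<phi> x \<bullet> grad \<phi> x) < - c"
    by (rule less_near_frontier[OF continuous_on_minus[OF grad_cont]]) (use c in auto)
  then obtain \<delta>\<^sub>1 where "0 < \<delta>\<^sub>1"
    and grad_large: "\<And>x. x \<in> closure \<Omega> \<Longrightarrow> - \<delta>\<^sub>1 < \<phi> x \<Longrightarrow> c < grad \<phi> x \<bullet> grad \<phi> x"
    by auto
  show ?thesis
    unfolding tendsto_iff eventually_at_right_field
  proof (intro allI impI)
    fix r :: real assume "0 < r"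
    define \<theta> where "\<theta> = c * (r / (C + 1))"
    have "0 < \<theta>" using \<open>0 < r\<close> \<open>0 < c\<close> \<open>0 \<le> C\<close> by (simp add: \<theta>_def)
    have "continuous_on (closure \<Omega>) (\<lambda>x. \<bar>G x \<bullet> grad \<phi> x\<bar>)"
      by (intro continuous_on_rabs continuous_on_inner G_cont
          continuous_on_subset[OF continuous_grad_phi subset_UNIV])
    then have "\<exists>\<delta>>0. \<forall>x\<in>closure \<Omega>. - \<delta> < \<phi> x \<longrightarrow> \<bar>G x \<bullet> grad \<phi> x\<bar> < \<theta>"
      by (rule less_near_frontier) (use no_flux \<open>0 < \<theta>\<close> in auto)
    then obtain \<delta>\<^sub>2 where "0 < \<delta>\<^sub>2" and flux_small:
      "\<And>x. x \<in> closure \<Omega> \<Longrightarrow> - \<delta>\<^sub>2 < \<phi> x \<Longrightarrow> \<bar>G x \<bullet> grad \<phi> x\<bar> < \<theta>"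
      by auto
    have "dist (integral \<Omega> (\<lambda>x. cutoff' (\<phi> x / \<epsilon>) / \<epsilon> * (G x \<bullet> grad \<phi> x))) 0 < r"
      if "0 < \<epsilon>" "\<epsilon> < min \<delta>\<^sub>1 \<delta>\<^sub>2 / 2" for \<epsilon>
    proof -
      have "\<bar>integral \<Omega> (\<lambda>x. cutoff' (\<phi> x / \<epsilon>) / \<epsilon> * (G x \<bullet> grad \<phi> x))\<bar> \<le> \<theta> / c * C"
        unfolding C_def
      proof (rule cutoff_flux_le[OF G_cont \<open>0 < \<epsilon>\<close> \<open>0 < c\<close> less_imp_le[OF \<open>0 < \<theta>\<close>]])
        fix x assume "x \<in> closure \<Omega>" "- (2 * \<epsilon>) < \<phi> x"
        with that grad_large flux_small
        show "c < grad \<phi> x \<bullet> grad \<phi> x \<and> \<bar>G x \<bullet> grad \<phi> x\<bar> \<le> \<theta>"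
          by (smt (verit) field_sum_of_halves)
      qed
      also have "\<dots> = r * (C / (C + 1))"
        using \<open>0 < c\<close> by (simp add: \<theta>_def)
      also have "\<dots> < r * 1"
        using \<open>0 < r\<close> \<open>0 \<le> C\<close> by (intro mult_strict_left_mono) auto
      finally show ?thesis
        by (simp add: dist_real_def)
    qed
    then show "\<exists>b>0. \<forall>\<epsilon>>0. \<epsilon> < b \<longrightarrow>
        dist (integral \<Omega> (\<lambda>x. cutoff' (\<phi> x / \<epsilon>) / \<epsilon> * (G x \<bullet> grad \<phi> x))) 0 < r"
      using \<open>0 < \<delta>\<^sub>1\<close> \<open>0 < \<delta>\<^sub>2\<close> by (intro exI[of _ "min \<delta>\<^sub>1 \<delta>\<^sub>2 / 2"]) simp
  qed
qed

lemma integrable_on_cutoff_mult: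
  fixes h D :: "real^'n \<Rightarrow> real"
  assumes D_cont: "continuous_on (closure \<Omega>) D" and D_eq: "\<And>x. x \<in> \<Omega> \<Longrightarrow> D x = h x"
  shows "(\<lambda>x. cutoff (\<phi> x / \<epsilon>) * h x) integrable_on \<Omega>"
proof -
  have "(\<lambda>x. cutoff (\<phi> x / \<epsilon>) * D x) integrable_on \<Omega>"
    by (intro integrable_on_domain continuous_on_mult continuous_cutoff_phi D_cont)
  then show ?thesis
    by (rule integrable_spike_finite[of "{}", rotated 2]) (auto simp: D_eq)
qed

lemma cutoff_integral_tendsto:
  fixes e :: "nat \<Rightarrow> real" and h D :: "real^'n \<Rightarrow> real"
  assumes e_tendsto: "e \<longlonglongrightarrow> 0" and e_pos: "\<And>k. 0 < e k"
    and D_cont: "continuous_on (closure \<Omega>) D" and D_eq: "\<And>x. x \<in> \<Omega> \<Longrightarrow> D x = h x"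
  shows "h integrable_on \<Omega>"
    and "(\<lambda>k. integral \<Omega> (\<lambda>x. cutoff (\<phi> x / e k) * h x)) \<longlonglongrightarrow> integral \<Omega> h"
proof -
  note integrable = integrable_on_cutoff_mult[OF D_cont D_eq]
  have dominated: "norm (cutoff (\<phi> x / e k) * h x) \<le> \<bar>D x\<bar>" if "x \<in> \<Omega>" for k x
    using cutoff_nonneg[of "\<phi> x / e k"] cutoff_le_1[of "\<phi> x / e k"] D_eq[OF that]
    by (simp add: abs_mult mult_left_le_one_le)
  have pointwise: "(\<lambda>k. cutoff (\<phi> x / e k) * h x) \<longlonglongrightarrow> h x" if "x \<in> \<Omega>" for x
  proof (rule tendsto_eventually)
    have "\<forall>\<^sub>F k in sequentially. e k < - \<phi> x / 2"
      using order_tendstoD(2)[OF e_tendsto] that by (simp add: domain_eq)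
    then show "\<forall>\<^sub>F k in sequentially. cutoff (\<phi> x / e k) * h x = h x"
    proof eventually_elim
      case (elim k)
      then have "\<phi> x / e k \<le> -2"
        using e_pos[of k] by (simp add: field_simps)
      then show ?case by (simp add: cutoff_eq_1)
    qed
  qed
  show "h integrable_on \<Omega>"
    and "(\<lambda>k. integral \<Omega> (\<lambda>x. cutoff (\<phi> x / e k) * h x)) \<longlonglongrightarrow> integral \<Omega> h"
    using dominated_convergence[OF integrable _ dominated pointwise]
      integrable_on_domain[OF continuous_on_rabs[OF D_cont]] by auto
qed

theorem divergence_has_integral_0:
  fixes F G :: "real^'n \<Rightarrow> real^'n" and D :: "real^'n \<Rightarrow> real"
  assumes F_diff: "\<And>x. x \<in> \<Omega> \<Longrightarrow> F differentiable (at x)"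
    and F_cont: "\<And>i. continuous_on \<Omega> (pdiff i (\<lambda>y. F y $ i))"
    and D_cont: "continuous_on (closure \<Omega>) D" and D_eq: "\<And>x. x \<in> \<Omega> \<Longrightarrow> D x = divg F x"
    and G_cont: "continuous_on (closure \<Omega>) G" and G_eq: "\<And>x. x \<in> \<Omega> \<Longrightarrow> G x = F x"
    and no_flux: "\<And>x. x \<in> frontier \<Omega> \<Longrightarrow> G x \<bullet> grad \<phi> x = 0"
  shows "(divg F has_integral 0) \<Omega>"
proof -
  define e :: "nat \<Rightarrow> real" where "e k = inverse (real (Suc k))" for k
  have e_pos: "0 < e k" for k
    by (simp add: e_def)
  have e_tendsto: "e \<longlonglongrightarrow> 0"
    unfolding e_def by (rule LIMSEQ_inverse_real_of_nat)
  note limit = cutoff_integral_tendsto[OF e_tendsto e_pos D_cont D_eq]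
  have by_parts: "integral \<Omega> (\<lambda>x. cutoff (\<phi> x / e k) * divg F x)
      = - integral \<Omega> (\<lambda>x. cutoff' (\<phi> x / e k) / e k * (G x \<bullet> grad \<phi> x))" for k
  proof -
    have "((\<lambda>x. cutoff' (\<phi> x / e k) / e k * (G x \<bullet> grad \<phi> x) + cutoff (\<phi> x / e k) * divg F x)
        has_integral 0) \<Omega>"
      using has_integral_cutoff_by_parts[OF e_pos F_diff F_cont]
      by (rule has_integral_spike_finite[of "{}", rotated 2]) (auto simp: G_eq inner_commute)
    from has_integral_diff[OF this integrable_integral[OF integrable_on_cutoff_mult[OF D_cont D_eq, of "e k"]]]
    have "((\<lambda>x. cutoff' (\<phi> x / e k) / e k * (G x \<bullet> grad \<phi> x)) has_integral
        - integral \<Omega> (\<lambda>x. cutoff (\<phi> x / e k) * divg F x)) \<Omega>"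
      by simp
    from integral_unique[OF this] show ?thesis
      by simp
  qed
  have "filterlim e (at_right 0) sequentially"
    using e_tendsto e_pos by (intro tendsto_imp_filterlim_at_right) auto
  with cutoff_flux_tendsto_0[OF G_cont no_flux]
  have "(\<lambda>k. integral \<Omega> (\<lambda>x. cutoff' (\<phi> x / e k) / e k * (G x \<bullet> grad \<phi> x))) \<longlonglongrightarrow> 0"
    by (rule filterlim_compose)
  then have "(\<lambda>k. integral \<Omega> (\<lambda>x. cutoff (\<phi> x / e k) * divg F x)) \<longlonglongrightarrow> - 0"
    unfolding by_parts by (rule tendsto_minus)
  with limit(2) have "integral \<Omega> (divg F) = 0"
    using LIMSEQ_unique by auto
  with limit(1) show ?thesis
    using integrable_integral by fastforce
qed

lemma normal_component_eq_0:
  fixes G :: "real^'n \<Rightarrow> real^'n"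
  assumes "x \<in> frontier \<Omega>" "continuous_on (closure \<Omega>) G" "\<And>y. y \<in> \<Omega> \<Longrightarrow> G y = grad f y"
    and "Lim (at x within \<Omega>) (grad f) \<bullet> grad \<phi> x = 0"
  shows "G x \<bullet> grad \<phi> x = 0"
proof -
  have x: "x \<in> closure \<Omega>" "x \<notin> \<Omega>"
    using assms(1) open_domain by (auto simp: frontier_def interior_open)
  have "(G \<longlongrightarrow> G x) (at x within \<Omega>)"
    using assms(2) x(1) closure_subset
    by (auto simp: continuous_on_def intro: tendsto_within_subset)
  then have "(grad f \<longlongrightarrow> G x) (at x within \<Omega>)"
    by (rule tendsto_cong[THEN iffD1, rotated]) (auto simp: eventually_at_filter assms(3))
  moreover have "\<not> trivial_limit (at x within \<Omega>)"
    using x by (auto simp: trivial_limit_within closure_def)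
  ultimately have "Lim (at x within \<Omega>) (grad f) = G x"
    by (rule tendsto_Lim[rotated])
  with assms(4) show ?thesis by simp
qed

lemma grad_extension_no_flux:
  assumes g: "C2_up_to_boundary \<Omega> g"
    and neumann: "\<And>x. x \<in> frontier \<Omega> \<Longrightarrow> Lim (at x within \<Omega>) (grad g) \<bullet> grad \<phi> x = 0"
  shows "\<exists>V. (\<forall>i. continuous_on (closure \<Omega>) (V i)) \<and> (\<forall>i. \<forall>x\<in>\<Omega>. V i x = pdiff i g x) \<and>
    (\<forall>x\<in>frontier \<Omega>. (\<chi> i. V i x) \<bullet> grad \<phi> x = 0)"
proof -
  have "\<And>i. extends_continuously \<Omega> (pdiff i g)"
    using g by (simp add: C2_up_to_boundary_def)
  then obtain V where V: "\<And>i. continuous_on (closure \<Omega>) (V i)" "\<And>i x. x \<in> \<Omega> \<Longrightarrow> V i x = pdiff i g x"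
    using extends_continuously_choice[where f="\<lambda>i. pdiff i g"] by blast
  have "(\<chi> i. V i x) \<bullet> grad \<phi> x = 0" if "x \<in> frontier \<Omega>" for x
    using V by (intro normal_component_eq_0[OF that _ _ neumann[OF that]])
      (auto intro: continuous_on_vec_lambda simp: vec_eq_iff)
  with V show ?thesis by blast
qed

lemma flux_has_integral_0:
  fixes q q' :: "real \<Rightarrow> real"
  assumes q_deriv: "\<And>s. 0 \<le> s \<Longrightarrow> (q has_real_derivative q' s) (at s)"
    and q'_cont: "continuous_on {0..} q'"
    and f_nonneg: "\<And>x. x \<in> closure \<Omega> \<Longrightarrow> 0 \<le> f x"
    and f_cont: "continuous_on (closure \<Omega>) f"
    and f_diff: "\<And>x. x \<in> \<Omega> \<Longrightarrow> f differentiable (at x)"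
    and f_pdiff: "\<And>i. extends_continuously \<Omega> (pdiff i f)"
    and g: "C2_up_to_boundary \<Omega> g"
    and neumann: "\<And>x. x \<in> frontier \<Omega> \<Longrightarrow> Lim (at x within \<Omega>) (grad g) \<bullet> grad \<phi> x = 0"
  shows "(divg (\<lambda>y. q (f y) *\<^sub>R grad g y) has_integral 0) \<Omega>"
proof -
  obtain U where U: "\<And>i. continuous_on (closure \<Omega>) (U i)"
      "\<And>i x. x \<in> \<Omega> \<Longrightarrow> U i x = pdiff i f x"
    using f_pdiff extends_continuously_choice[where f="\<lambda>i. pdiff i f"] by blast
  obtain V1 where V1: "\<And>i. continuous_on (closure \<Omega>) (V1 i)"
      "\<And>i x. x \<in> \<Omega> \<Longrightarrow> V1 i x = pdiff i g x" "\<And>x. x \<in> frontier \<Omega> \<Longrightarrow> (\<chi> i. V1 i x) \<bullet> grad \<phi> x = 0"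
    using grad_extension_no_flux[OF g neumann] by blast
  have "\<And>i. extends_continuously \<Omega> (pdiff i (pdiff i g))"
    using g by (simp add: C2_up_to_boundary_def)
  then obtain V2 where V2: "\<And>i. continuous_on (closure \<Omega>) (V2 i)"
      "\<And>i x. x \<in> \<Omega> \<Longrightarrow> V2 i x = pdiff i (pdiff i g) x"
    using extends_continuously_choice[where f="\<lambda>i. pdiff i (pdiff i g)"] by blast
  have pdiff_g_diff: "\<And>i x. x \<in> \<Omega> \<Longrightarrow> pdiff i g differentiable (at x)"
    using g by (simp add: C2_up_to_boundary_def)
  have f_range: "f ` closure \<Omega> \<subseteq> {0..}"
    using f_nonneg by auto
  have q_cont: "continuous_on {0..} q"
    using q_deriv by (meson DERIV_isCont atLeast_iff continuous_at_imp_continuous_on)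
  have qf_cont: "continuous_on (closure \<Omega>) (\<lambda>x. q (f x))"
    by (rule continuous_on_compose2[OF q_cont f_cont f_range])
  have q'f_cont: "continuous_on (closure \<Omega>) (\<lambda>x. q' (f x))"
    by (rule continuous_on_compose2[OF q'_cont f_cont f_range])
  define F where "F y = q (f y) *\<^sub>R grad g y" for y
  have qf_diff: "(\<lambda>y. q (f y)) differentiable (at x)" if "x \<in> \<Omega>" for x
    using q_deriv f_nonneg closure_subset that
    by (intro differentiable_compose_real[OF _ f_diff[OF that]]) auto
  have F_diff: "F differentiable (at x)" if "x \<in> \<Omega>" for x
    unfolding F_def[abs_def]
    by (intro differentiable_scaleR qf_diff grad_differentiable pdiff_g_diff that)
  define Q where "Q i x = q' (f x) * U i x * V1 i x + q (f x) * V2 i x" for i x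
  have pdiff_F: "pdiff i (\<lambda>y. F y $ i) x = Q i x" if "x \<in> \<Omega>" for i x
  proof -
    have "0 \<le> f x" using f_nonneg closure_subset that by blast
    have "pdiff i (\<lambda>y. F y $ i) x = pdiff i (\<lambda>y. q (f y) * pdiff i g y) x"
      by (simp add: F_def)
    also have "\<dots> = q' (f x) * pdiff i f x * pdiff i g x + q (f x) * pdiff i (pdiff i g) x"
      using pdiff_compose_real[OF q_deriv[OF \<open>0 \<le> f x\<close>] f_diff[OF that]]
      by (simp add: pdiff_mult[OF qf_diff[OF that] pdiff_g_diff[OF that]])
    finally show ?thesis
      using U(2)[OF that] V1(2)[OF that] V2(2)[OF that] by (simp add: Q_def)
  qed
  have Q_cont: "continuous_on (closure \<Omega>) (Q i)" for i
    unfolding Q_def[abs_def]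
    by (intro continuous_on_add continuous_on_mult qf_cont q'f_cont U(1) V1(1) V2(1))
  have "(divg F has_integral 0) \<Omega>"
  proof (rule divergence_has_integral_0[OF F_diff])
    show "continuous_on \<Omega> (pdiff i (\<lambda>y. F y $ i))" for i
      using continuous_on_subset[OF Q_cont closure_subset] pdiff_F by (simp add: continuous_on_eq)
    show "continuous_on (closure \<Omega>) (\<lambda>x. \<Sum>i\<in>UNIV. Q i x)"
      using Q_cont by (intro continuous_on_sum) auto
    show "(\<Sum>i\<in>UNIV. Q i x) = divg F x" if "x \<in> \<Omega>" for x
      using pdiff_F[OF that] by (simp add: divg_eq_sum_pdiff[OF F_diff[OF that]])
    show "continuous_on (closure \<Omega>) (\<lambda>x. q (f x) *\<^sub>R (\<chi> i. V1 i x))"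
      by (intro continuous_on_scaleR qf_cont continuous_on_vec_lambda V1(1))
    show "q (f x) *\<^sub>R (\<chi> i. V1 i x) = F x" if "x \<in> \<Omega>" for x
      using V1(2)[OF that] by (simp add: F_def vec_eq_iff)
    show "q (f x) *\<^sub>R (\<chi> i. V1 i x) \<bullet> grad \<phi> x = 0" if "x \<in> frontier \<Omega>" for x
      using V1(3)[OF that] by simp
  qed
  then show ?thesis by (simp add: F_def[abs_def])
qed

lemma lap_has_integral_0:
  assumes "C2_up_to_boundary \<Omega> f"
    and "\<And>x. x \<in> frontier \<Omega> \<Longrightarrow> Lim (at x within \<Omega>) (grad f) \<bullet> grad \<phi> x = 0"
  shows "(lap f has_integral 0) \<Omega>"
proof -
  have "extends_continuously \<Omega> (pdiff i (\<lambda>_. 0))" for i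
    unfolding extends_continuously_def by (auto intro: continuous_on_const)
  then have "(divg (\<lambda>y. 1 *\<^sub>R grad f y) has_integral 0) \<Omega>"
    using flux_has_integral_0[where q="\<lambda>_. 1" and q'="\<lambda>_. 0" and f="\<lambda>_. 0"] assms
    by (auto intro: continuous_on_const)
  then show ?thesis
    by (simp add: lap_def[abs_def])
qed

end

section \<open>Integrals depending on a parameter\<close>

lemma continuous_on_slice:
  assumes "continuous_on (A \<times> B) (\<lambda>(x, s). f x s)" "s \<in> B"
  shows "continuous_on A (\<lambda>x. f x s)"
  using continuous_on_compose2[OF assms(1) continuous_on_Pair[OF continuous_on_id continuous_on_const]] assms(2)
  by auto

lemma MVT_between:
  fixes f f' :: "real \<Rightarrow> real"
  assumes "s \<noteq> t" "\<And>z. min s t \<le> z \<Longrightarrow> z \<le> max s t \<Longrightarrow> (f has_real_derivative f' z) (at z)"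
  obtains z where "min s t < z" "z < max s t" "(f s - f t) / (s - t) = f' z"
proof (cases "s < t")
  case True
  with MVT2[of s t f f'] assms(2) obtain z where "s < z" "z < t" "f t - f s = (t - s) * f' z"
    by auto
  with True show ?thesis
    by (intro that[of z]) (auto simp: field_simps)
next
  case False
  with assms(1) have "t < s" by simp
  with MVT2[of t s f f'] assms(2) obtain z where "t < z" "z < s" "f s - f t = (s - t) * f' z"
    by auto
  with \<open>t < s\<close> show ?thesis
    by (intro that[of z]) (auto simp: field_simps)
qed

lemma divide_add_one_mult_less:
  fixes e M :: real
  assumes "0 < e" "0 \<le> M"
  shows "e / (M + 1) * M < e"
proof -
  have "e / (M + 1) * M < e / (M + 1) * (M + 1)"
    using assms by (intro mult_strict_left_mono) auto
  also have "\<dots> = e"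
    using assms(2) by simp
  finally show ?thesis .
qed

lemma continuous_on_integral_param:
  fixes f :: "real^'n::finite \<Rightarrow> real \<Rightarrow> real"
  assumes S: "bounded S" "open S"
    and f_cont: "continuous_on (closure S \<times> {a..b}) (\<lambda>(x, s). f x s)"
  shows "continuous_on {a..b} (\<lambda>s. integral S (\<lambda>x. f x s))"
  unfolding continuous_on_iff
proof (intro ballI allI impI)
  fix s e :: real assume s: "s \<in> {a..b}" and "0 < e"
  define M where "M = measure lebesgue S"
  have "0 < e / (M + 1)"
    using \<open>0 < e\<close> measure_nonneg[of lebesgue S] unfolding M_def by (simp add: add_nonneg_pos)
  moreover have "uniformly_continuous_on (closure S \<times> {a..b}) (\<lambda>(x, s). f x s)"
    using f_cont S by (intro compact_uniformly_continuous compact_Times) (auto simp: compact_closure)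
  ultimately obtain d where "0 < d" and d: "\<And>p q. p \<in> closure S \<times> {a..b} \<Longrightarrow> q \<in> closure S \<times> {a..b}
      \<Longrightarrow> dist q p < d \<Longrightarrow> dist ((\<lambda>(x, s). f x s) q) ((\<lambda>(x, s). f x s) p) < e / (M + 1)"
    unfolding uniformly_continuous_on_def by metis
  have slice: "(\<lambda>x. f x s) integrable_on S" if "s \<in> {a..b}" for s
    by (intro integrable_on_continuous_closure S continuous_on_slice[OF f_cont that])
  have "dist (integral S (\<lambda>x. f x s')) (integral S (\<lambda>x. f x s)) < e"
    if s': "s' \<in> {a..b}" "dist s' s < d" for s'
  proof -
    have "norm (f x s' - f x s) \<le> e / (M + 1)" if "x \<in> S" for x
      using d[of "(x, s)" "(x, s')"] closure_subset[of S] that s s'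
      by (force simp: dist_Pair_Pair dist_norm)
    then have "norm (integral S (\<lambda>x. f x s' - f x s)) \<le> e / (M + 1) * M"
      unfolding M_def by (intro norm_integral_le_measure S integrable_diff slice s s')
    also have "\<dots> < e"
      using \<open>0 < e\<close> by (rule divide_add_one_mult_less) (simp add: M_def)
    finally show ?thesis
      by (simp add: dist_norm integral_diff[OF slice[OF s'(1)] slice[OF s]])
  qed
  with \<open>0 < d\<close> show "\<exists>d>0. \<forall>s'\<in>{a..b}. dist s' s < d \<longrightarrow>
      dist (integral S (\<lambda>x. f x s')) (integral S (\<lambda>x. f x s)) < e"
    by blast
qed

lemma integral_has_real_derivative_param:
  fixes f f' :: "real^'n::finite \<Rightarrow> real \<Rightarrow> real"
  assumes S: "bounded S" "open S" and t: "a < t" "t < b"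
    and f_cont: "continuous_on (closure S \<times> {a..b}) (\<lambda>(x, s). f x s)"
    and f_deriv: "\<And>x s. x \<in> S \<Longrightarrow> a < s \<Longrightarrow> s < b \<Longrightarrow> (f x has_real_derivative f' x s) (at s)"
    and P_cont: "continuous_on (closure S \<times> {a..b}) P"
    and P_eq: "\<And>x s. x \<in> S \<Longrightarrow> a < s \<Longrightarrow> s < b \<Longrightarrow> P (x, s) = f' x s"
  shows "(\<lambda>x. f' x t) integrable_on S"
    and "((\<lambda>s. integral S (\<lambda>x. f x s)) has_real_derivative integral S (\<lambda>x. f' x t)) (at t)"
proof -
  define M where "M = measure lebesgue S"
  have slice: "(\<lambda>x. f x s) integrable_on S" if "s \<in> {a..b}" for s
    by (intro integrable_on_continuous_closure S continuous_on_slice[OF f_cont that])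
  have "(\<lambda>x. P (x, t)) integrable_on S"
    using t P_cont
    by (intro integrable_on_continuous_closure S continuous_on_slice[where f="\<lambda>x s. P (x, s)"]) auto
  then show f'_int: "(\<lambda>x. f' x t) integrable_on S"
    by (rule integrable_spike_finite[of "{}", rotated 2]) (use P_eq t in auto)
  have P_uc: "uniformly_continuous_on (closure S \<times> {a..b}) P"
    using P_cont S by (intro compact_uniformly_continuous compact_Times) (auto simp: compact_closure)
  show "((\<lambda>s. integral S (\<lambda>x. f x s)) has_real_derivative integral S (\<lambda>x. f' x t)) (at t)"
    unfolding has_field_derivative_iff LIM_eq
  proof (intro allI impI)
    fix r :: real assume "0 < r"
    then have "0 < r / (M + 1)"
      using measure_nonneg[of lebesgue S] unfolding M_def by (simp add: add_nonneg_pos)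
    with P_uc obtain d where "0 < d" and d: "\<And>p q. p \<in> closure S \<times> {a..b} \<Longrightarrow> q \<in> closure S \<times> {a..b}
        \<Longrightarrow> dist q p < d \<Longrightarrow> dist (P q) (P p) < r / (M + 1)"
      unfolding uniformly_continuous_on_def by metis
    define \<delta> where "\<delta> = min d (min (t - a) (b - t))"
    have "0 < \<delta>" using \<open>0 < d\<close> t by (simp add: \<delta>_def)
    have "norm ((integral S (\<lambda>x. f x s) - integral S (\<lambda>x. f x t)) / (s - t)
        - integral S (\<lambda>x. f' x t)) < r" if "s \<noteq> t" "norm (s - t) < \<delta>" for s
    proof -
      have s: "a < s" "s < b" using that by (auto simp: \<delta>_def)
      have "norm ((f x s - f x t) / (s - t) - f' x t) \<le> r / (M + 1)" if x: "x \<in> S" for x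
      proof -
        obtain z where z: "min s t < z" "z < max s t" "(f x s - f x t) / (s - t) = f' x z"
          by (rule MVT_between[of s t "f x" "f' x"]) (use f_deriv[OF x] \<open>s \<noteq> t\<close> s t in auto)
        have "x \<in> closure S" using x closure_subset by blast
        moreover have "dist (x, z) (x, t) < d"
          using z \<open>norm (s - t) < \<delta>\<close> by (auto simp: dist_Pair_Pair dist_real_def \<delta>_def)
        moreover have "a \<le> z" "z \<le> b"
          using z s t by (auto simp: min_less_iff_disj less_max_iff_disj)
        ultimately have "dist (P (x, z)) (P (x, t)) < r / (M + 1)"
          using d[of "(x, t)" "(x, z)"] t by auto
        then show ?thesis
          using z(3) P_eq[OF x] z s t by (simp add: dist_norm)
      qed
      then have "norm (integral S (\<lambda>x. (f x s - f x t) / (s - t) - f' x t)) \<le> r / (M + 1) * M"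
        unfolding M_def using s t
        by (intro norm_integral_le_measure S integrable_diff integrable_on_divide slice f'_int) auto
      also have "\<dots> < r"
        using \<open>0 < r\<close> by (rule divide_add_one_mult_less) (simp add: M_def)
      finally show ?thesis
        using s t by (simp add: integral_diff integrable_diff integrable_on_divide slice f'_int)
    qed
    with \<open>0 < \<delta>\<close> show "\<exists>\<delta>>0. \<forall>s. s \<noteq> t \<and> norm (s - t) < \<delta> \<longrightarrow>
        norm ((integral S (\<lambda>x. f x s) - integral S (\<lambda>x. f x t)) / (s - t)
          - integral S (\<lambda>x. f' x t)) < r"
      by blast
  qed
qed

lemma linear_relaxation_solution:
  fixes y :: "real \<Rightarrow> real"
  assumes "0 < t" "continuous_on {0..t} y"
    and "\<And>s. 0 < s \<Longrightarrow> s < t \<Longrightarrow> (y has_real_derivative c - y s) (at s)"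
  shows "y t = exp (- t) * y 0 + c * (1 - exp (- t))"
proof -
  define z where "z s = exp s * (y s - c)" for s
  have "z t = z 0"
  proof (rule DERIV_isconst_end[OF assms(1)])
    show "continuous_on {0..t} z"
      unfolding z_def[abs_def] using assms(2) by (intro continuous_intros)
    show "(z has_real_derivative 0) (at s)" if "0 < s" "s < t" for s
      using DERIV_mult[OF DERIV_exp DERIV_diff[OF assms(3)[OF that] DERIV_const[of c]]]
      by (simp add: z_def[abs_def] algebra_simps)
  qed
  then have "exp t * (y t - c) = y 0 - c"
    by (simp add: z_def)
  then show ?thesis
    by (simp add: exp_minus field_simps)
qed

section \<open>The total mass\<close>

lemma bounded_smooth_domain_level_set:
  assumes "bounded_smooth_domain \<Omega>"
  shows "level_set_domain \<Omega> (SOME \<phi>. defining_function \<Omega> \<phi>)"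
proof -
  let ?\<phi> = "SOME \<phi>. defining_function \<Omega> \<phi>"
  have "defining_function \<Omega> ?\<phi>"
    using assms unfolding bounded_smooth_domain_def by (metis someI_ex)
  then have smooth: "C_infinity ?\<phi>" and "\<Omega> = {x. ?\<phi> x < 0}" and "\<And>x. ?\<phi> x = 0 \<Longrightarrow> grad ?\<phi> x \<noteq> 0"
    unfolding defining_function_def by auto
  moreover have diff: "pdiff_iter is ?\<phi> differentiable (at x)"
    and cont: "continuous_on UNIV (pdiff_iter is ?\<phi>)" for "is" x
    using smooth unfolding C_infinity_def by auto
  moreover have "continuous_on UNIV (grad ?\<phi>)"
    unfolding grad_def[abs_def] using cont[of "[i]" for i] by (intro continuous_on_vec_lambda) simp
  moreover have "bounded \<Omega>"
    using assms by (simp add: bounded_smooth_domain_def)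
  ultimately show ?thesis
    using diff[of "[]"] diff[of "[i]" for i] cont[of "[i, i]" for i]
    by unfold_locales auto
qed

lemma normal_deriv_eq_0_iff:
  assumes "bounded_smooth_domain \<Omega>" "x \<in> frontier \<Omega>"
  shows "normal_deriv \<Omega> u x t = 0 \<longleftrightarrow>
    Lim (at x within \<Omega>) (grad (\<lambda>z. u z t)) \<bullet> grad (SOME \<phi>. defining_function \<Omega> \<phi>) x = 0"
proof -
  interpret level_set_domain \<Omega> "SOME \<phi>. defining_function \<Omega> \<phi>"
    by (rule bounded_smooth_domain_level_set[OF assms(1)])
  have "grad (SOME \<phi>. defining_function \<Omega> \<phi>) x \<noteq> 0"
    using assms(2) frontier_domain grad_phi_nonzero by blast
  then show ?thesis
    by (simp add: normal_deriv_def outward_normal_def Let_def)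
qed

lemma ereal_less_if_le_less: "s \<le> t \<Longrightarrow> ereal t < T \<Longrightarrow> ereal s < T"
  by (meson ereal_less_eq(3) order.strict_trans1)

lemma continuous_on_cyl_slice:
  assumes "continuous_on (cyl_closed \<Omega> T) U" "0 < t" "ereal t < T"
  shows "continuous_on (closure \<Omega>) (\<lambda>x. U (x, t))"
  by (rule continuous_on_compose2[OF assms(1) continuous_on_Pair[OF continuous_on_id continuous_on_const]])
    (use assms(2,3) in \<open>auto simp: cyl_closed_def\<close>)

lemma extends_continuously_cyl_slice:
  assumes "continuous_on (cyl_closed \<Omega> T) U" "\<forall>(x, s)\<in>cyl_open \<Omega> T. U (x, s) = g x s"
    and "0 < t" "ereal t < T"
  shows "extends_continuously \<Omega> (\<lambda>x. g x t)"
  unfolding extends_continuously_def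
  using continuous_on_cyl_slice[OF assms(1,3,4)] assms(2-4) by (auto simp: cyl_open_def)

lemma C21_slice:
  assumes "C21 \<Omega> T u" "0 < t" "ereal t < T"
  shows "C2_up_to_boundary \<Omega> (\<lambda>y. u y t)"
proof -
  have "(x, t) \<in> cyl_open \<Omega> T" if "x \<in> \<Omega>" for x
    using that assms(2,3) by (simp add: cyl_open_def)
  moreover have "extends_continuously \<Omega> (pdiff i (\<lambda>y. u y t))"
    and "extends_continuously \<Omega> (pdiff i (pdiff i (\<lambda>y. u y t)))" for i
    using assms extends_continuously_cyl_slice[where g="\<lambda>x s. pdiff i (\<lambda>y. u y s) x"]
      extends_continuously_cyl_slice[where g="\<lambda>x s. pdiff i (pdiff i (\<lambda>y. u y s)) x"]
    unfolding C21_def by blast+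
  ultimately show ?thesis
    using assms(1) unfolding C2_up_to_boundary_def C21_def by fast
qed

lemma integrable_on_time_slice:
  fixes u :: "real^'n::finite \<Rightarrow> real \<Rightarrow> real"
  assumes "bounded \<Omega>" "open \<Omega>" "continuous_on (cyl_closed0 \<Omega> T) (\<lambda>(x, t). u x t)"
    and "0 \<le> t" "ereal t < T"
  shows "(\<lambda>x. u x t) integrable_on \<Omega>"
  using assms
  by (intro integrable_on_continuous_closure continuous_on_compose2[OF assms(3)
        continuous_on_Pair[OF continuous_on_id continuous_on_const], simplified])
    (auto simp: cyl_closed0_def)

lemma continuous_on_integral_time:
  fixes u :: "real^'n::finite \<Rightarrow> real \<Rightarrow> real"
  assumes "bounded \<Omega>" "open \<Omega>" "continuous_on (cyl_closed0 \<Omega> T) (\<lambda>(x, t). u x t)" "ereal t < T"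
  shows "continuous_on {0..t} (\<lambda>s. integral \<Omega> (\<lambda>x. u x s))"
proof (rule continuous_on_integral_param[OF assms(1,2) continuous_on_subset[OF assms(3)]])
  show "closure \<Omega> \<times> {0..t} \<subseteq> cyl_closed0 \<Omega> T"
    using assms(4) by (auto simp: cyl_closed0_def intro: ereal_less_if_le_less)
qed

lemma integral_has_derivative_time:
  fixes u :: "real^'n::finite \<Rightarrow> real \<Rightarrow> real"
  assumes \<Omega>: "bounded \<Omega>" "open \<Omega>" and u_C0: "continuous_on (cyl_closed0 \<Omega> T) (\<lambda>(x, t). u x t)"
    and u_C21: "C21 \<Omega> T u" and t: "0 < t" "ereal t < T"
  shows "(\<lambda>x. deriv (\<lambda>s. u x s) t) integrable_on \<Omega>"
    and "((\<lambda>s. integral \<Omega> (\<lambda>x. u x s)) has_real_derivative integral \<Omega> (\<lambda>x. deriv (\<lambda>s. u x s) t)) (at t)"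
proof -
  obtain b where b: "t < b" "ereal b < T"
    using ereal_dense2[OF t(2)] by auto
  obtain U where U: "continuous_on (cyl_closed \<Omega> T) U"
    "\<forall>(x, s)\<in>cyl_open \<Omega> T. U (x, s) = deriv (\<lambda>s. u x s) s"
    using u_C21 unfolding C21_def by blast
  have box: "closure \<Omega> \<times> {t / 2..b} \<subseteq> cyl_closed \<Omega> T \<inter> cyl_closed0 \<Omega> T"
    using t b by (auto simp: cyl_closed_def cyl_closed0_def intro: ereal_less_if_le_less)
  have inside: "(x, s) \<in> cyl_open \<Omega> T" if "x \<in> \<Omega>" "t / 2 < s" "s < b" for x s
    using that t b by (auto simp: cyl_open_def intro: ereal_less_if_le_less[of s b])
  have u_cont: "continuous_on (closure \<Omega> \<times> {t / 2..b}) (\<lambda>(x, s). u x s)"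
    using box by (auto intro: continuous_on_subset[OF u_C0])
  have U_cont: "continuous_on (closure \<Omega> \<times> {t / 2..b}) U"
    using box by (auto intro: continuous_on_subset[OF U(1)])
  have u_deriv: "((\<lambda>s. u x s) has_real_derivative deriv (\<lambda>s. u x s) s) (at s)"
    if "x \<in> \<Omega>" "t / 2 < s" "s < b" for x s
    using u_C21 inside[OF that] unfolding C21_def
    by (auto simp: DERIV_deriv_iff_real_differentiable)
  have U_eq: "U (x, s) = deriv (\<lambda>s. u x s) s" if "x \<in> \<Omega>" "t / 2 < s" "s < b" for x s
    using U(2) inside[OF that] by auto
  have "t / 2 < t" using t by simp
  note param = integral_has_real_derivative_param[where f=u and f'="\<lambda>x s. deriv (\<lambda>s. u x s) s",
      OF \<Omega> this b(1) u_cont u_deriv U_cont U_eq]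
  show "(\<lambda>x. deriv (\<lambda>s. u x s) t) integrable_on \<Omega>"
    and "((\<lambda>s. integral \<Omega> (\<lambda>x. u x s)) has_real_derivative integral \<Omega> (\<lambda>x. deriv (\<lambda>s. u x s) t)) (at t)"
    using param by blast+
qed

lemma saturation_has_derivative:
  fixes s \<alpha> :: real
  assumes "0 \<le> s"
  shows "((\<lambda>s. s / (1 + s) powr \<alpha>) has_real_derivative
    ((1 + s) powr \<alpha> - s * (\<alpha> * (1 + s) powr (\<alpha> - 1))) / ((1 + s) powr \<alpha>)\<^sup>2) (at s)"
  using assms by (auto intro!: derivative_eq_intros simp: power2_eq_square)

lemma continuous_on_saturation_derivative:
  fixes \<alpha> :: real
  shows "continuous_on {0..} (\<lambda>s. ((1 + s) powr \<alpha> - s * (\<alpha> * (1 + s) powr (\<alpha> - 1))) / ((1 + s) powr \<alpha>)\<^sup>2)"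
  by (auto intro!: continuous_intros)

lemma total_mass_has_derivative:
  fixes \<Omega> :: "(real^'n::finite) set"
    and \<alpha> \<kappa> :: real and T :: ereal
    and u v w :: "real^'n \<Rightarrow> real \<Rightarrow> real"
  assumes dom: "bounded_smooth_domain \<Omega>"
    and u_nonneg: "\<forall>(x,t)\<in>cyl_closed0 \<Omega> T. u x t \<ge> 0"
    and u_C0: "continuous_on (cyl_closed0 \<Omega> T) (\<lambda>(x,t). u x t)"
    and v_C0: "continuous_on (cyl_closed0 \<Omega> T) (\<lambda>(x,t). v x t)"
    and u_C21: "C21 \<Omega> T u"
    and v_C21: "C21 \<Omega> T v"
    and u_eq: "\<forall>(x,t)\<in>cyl_open \<Omega> T.
        deriv (\<lambda>s. u x s) t =
          lap (\<lambda>y. u y t) x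
          - divg (\<lambda>y. (u y t / (1 + u y t) powr \<alpha>) *\<^sub>R grad (\<lambda>z. v z t) y) x
          - u x t * w x t + \<kappa> - u x t"
    and v_eq: "\<forall>(x,t)\<in>cyl_open \<Omega> T.
        deriv (\<lambda>s. v x s) t = lap (\<lambda>y. v y t) x + u x t * w x t - v x t"
    and u_bc: "\<forall>x\<in>frontier \<Omega>. \<forall>t. 0 < t \<and> ereal t < T \<longrightarrow> normal_deriv \<Omega> u x t = 0"
    and v_bc: "\<forall>x\<in>frontier \<Omega>. \<forall>t. 0 < t \<and> ereal t < T \<longrightarrow> normal_deriv \<Omega> v x t = 0"
    and t: "0 < t" "ereal t < T"
  shows "((\<lambda>s. integral \<Omega> (\<lambda>x. u x s) + integral \<Omega> (\<lambda>x. v x s)) has_real_derivative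
           \<kappa> * measure lebesgue \<Omega> - (integral \<Omega> (\<lambda>x. u x t) + integral \<Omega> (\<lambda>x. v x t))) (at t)"
proof -
  interpret level_set_domain \<Omega> "SOME \<phi>. defining_function \<Omega> \<phi>"
    by (rule bounded_smooth_domain_level_set[OF dom])
  have neumann: "Lim (at x within \<Omega>) (grad (\<lambda>z. f z t)) \<bullet> grad (SOME \<phi>. defining_function \<Omega> \<phi>) x = 0"
    if "\<forall>x\<in>frontier \<Omega>. \<forall>t. 0 < t \<and> ereal t < T \<longrightarrow> normal_deriv \<Omega> f x t = 0" "x \<in> frontier \<Omega>"
    for f :: "real^'n \<Rightarrow> real \<Rightarrow> real" and x
    using that t normal_deriv_eq_0_iff[OF dom] by blast
  have u_C2: "C2_up_to_boundary \<Omega> (\<lambda>y. u y t)" and v_C2: "C2_up_to_boundary \<Omega> (\<lambda>y. v y t)"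
    using C21_slice t u_C21 v_C21 by blast+
  have lap_u: "(lap (\<lambda>y. u y t) has_integral 0) \<Omega>"
    using u_C2 neumann[OF u_bc] by (rule lap_has_integral_0)
  have lap_v: "(lap (\<lambda>y. v y t) has_integral 0) \<Omega>"
    using v_C2 neumann[OF v_bc] by (rule lap_has_integral_0)
  have flux: "(divg (\<lambda>y. (u y t / (1 + u y t) powr \<alpha>) *\<^sub>R grad (\<lambda>z. v z t) y) has_integral 0) \<Omega>"
  proof (rule flux_has_integral_0[OF saturation_has_derivative continuous_on_saturation_derivative
        _ _ _ _ v_C2 neumann[OF v_bc]])
    show "0 \<le> u x t" if "x \<in> closure \<Omega>" for x
      using u_nonneg that t by (auto simp: cyl_closed0_def)
    show "continuous_on (closure \<Omega>) (\<lambda>x. u x t)"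
      by (rule continuous_on_compose2[OF u_C0 continuous_on_Pair[OF continuous_on_id continuous_on_const],
          simplified]) (use t in \<open>auto simp: cyl_closed0_def\<close>)
  qed (use u_C2 in \<open>auto simp: C2_up_to_boundary_def\<close>)
  have u_int: "(\<lambda>x. u x t) integrable_on \<Omega>" and v_int: "(\<lambda>x. v x t) integrable_on \<Omega>"
    using t by (auto intro!: integrable_on_time_slice[OF bounded_domain open_domain] u_C0 v_C0)
  note du = integral_has_derivative_time[OF bounded_domain open_domain u_C0 u_C21 t]
  note dv = integral_has_derivative_time[OF bounded_domain open_domain v_C0 v_C21 t]
  have "((\<lambda>x. lap (\<lambda>y. u y t) x + lap (\<lambda>y. v y t) x
      - divg (\<lambda>y. (u y t / (1 + u y t) powr \<alpha>) *\<^sub>R grad (\<lambda>z. v z t) y) x + \<kappa> - (u x t + v x t))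
      has_integral 0 + 0 - 0 + \<kappa> * measure lebesgue \<Omega> - (integral \<Omega> (\<lambda>x. u x t) + integral \<Omega> (\<lambda>x. v x t))) \<Omega>"
    by (intro has_integral_diff has_integral_add lap_u lap_v flux integrable_integral u_int v_int
        has_integral_const_measure bounded_domain open_domain)
  then have "((\<lambda>x. lap (\<lambda>y. u y t) x + lap (\<lambda>y. v y t) x
      - divg (\<lambda>y. (u y t / (1 + u y t) powr \<alpha>) *\<^sub>R grad (\<lambda>z. v z t) y) x + \<kappa> - (u x t + v x t))
      has_integral \<kappa> * measure lebesgue \<Omega> - (integral \<Omega> (\<lambda>x. u x t) + integral \<Omega> (\<lambda>x. v x t))) \<Omega>"
    by (rule has_integral_eq_rhs) simp
  then have "((\<lambda>x. deriv (\<lambda>s. u x s) t + deriv (\<lambda>s. v x s) t) has_integral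
      \<kappa> * measure lebesgue \<Omega> - (integral \<Omega> (\<lambda>x. u x t) + integral \<Omega> (\<lambda>x. v x t))) \<Omega>"
    by (rule has_integral_spike_finite[of "{}", rotated 2])
      (use u_eq v_eq t in \<open>auto simp: cyl_open_def\<close>)
  then have "integral \<Omega> (\<lambda>x. deriv (\<lambda>s. u x s) t) + integral \<Omega> (\<lambda>x. deriv (\<lambda>s. v x s) t)
      = \<kappa> * measure lebesgue \<Omega> - (integral \<Omega> (\<lambda>x. u x t) + integral \<Omega> (\<lambda>x. v x t))"
    using integral_add[OF du(1) dv(1)] by (simp add: integral_unique)
  with DERIV_add[OF du(2) dv(2)] show ?thesis
    by simp
qed

theorem corollary2p3:
  fixes \<Omega> :: "(real^'n::finite) set"
    and \<alpha> \<kappa> :: real and T :: ereal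
    and u v w :: "real^'n \<Rightarrow> real \<Rightarrow> real"
  assumes dom: "bounded_smooth_domain \<Omega>"
    and alpha: "\<alpha> \<ge> 0" and kappa: "\<kappa> \<ge> 0" and T: "T > 0"
    and u_nonneg: "\<forall>(x,t)\<in>cyl_closed0 \<Omega> T. u x t \<ge> 0"
    and v_nonneg: "\<forall>(x,t)\<in>cyl_closed0 \<Omega> T. v x t \<ge> 0"
    and u_C0: "continuous_on (cyl_closed0 \<Omega> T) (\<lambda>(x,t). u x t)"
    and v_C0: "continuous_on (cyl_closed0 \<Omega> T) (\<lambda>(x,t). v x t)"
    and u_C21: "C21 \<Omega> T u"
    and v_C21: "C21 \<Omega> T v"
    and u_eq: "\<forall>(x,t)\<in>cyl_open \<Omega> T.
        deriv (\<lambda>s. u x s) t =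
          lap (\<lambda>y. u y t) x
          - divg (\<lambda>y. (u y t / (1 + u y t) powr \<alpha>) *\<^sub>R grad (\<lambda>z. v z t) y) x
          - u x t * w x t + \<kappa> - u x t"
    and v_eq: "\<forall>(x,t)\<in>cyl_open \<Omega> T.
        deriv (\<lambda>s. v x s) t = lap (\<lambda>y. v y t) x + u x t * w x t - v x t"
    and u_bc: "\<forall>x\<in>frontier \<Omega>. \<forall>t. 0 < t \<and> ereal t < T \<longrightarrow> normal_deriv \<Omega> u x t = 0"
    and v_bc: "\<forall>x\<in>frontier \<Omega>. \<forall>t. 0 < t \<and> ereal t < T \<longrightarrow> normal_deriv \<Omega> v x t = 0"
    and w_bc: "\<forall>x\<in>frontier \<Omega>. \<forall>t. 0 < t \<and> ereal t < T \<longrightarrow> normal_deriv \<Omega> w x t = 0"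
  shows "\<forall>t. 0 < t \<and> ereal t < T \<longrightarrow>
    integral \<Omega> (\<lambda>x. v x t)
      \<le> exp (- t) * (integral \<Omega> (\<lambda>x. u x 0) + integral \<Omega> (\<lambda>x. v x 0))
        + \<kappa> * measure lebesgue \<Omega> * (1 - exp (- t))"
proof (intro allI impI)
  fix t assume t: "0 < t \<and> ereal t < T"
  interpret level_set_domain \<Omega> "SOME \<phi>. defining_function \<Omega> \<phi>"
    by (rule bounded_smooth_domain_level_set[OF dom])
  define Y where "Y s = integral \<Omega> (\<lambda>x. u x s) + integral \<Omega> (\<lambda>x. v x s)" for s
  have "Y t = exp (- t) * Y 0 + \<kappa> * measure lebesgue \<Omega> * (1 - exp (- t))"
  proof (rule linear_relaxation_solution)
    show "continuous_on {0..t} Y"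
      unfolding Y_def[abs_def] using t
      by (intro continuous_on_add continuous_on_integral_time[OF bounded_domain open_domain u_C0]
          continuous_on_integral_time[OF bounded_domain open_domain v_C0]) auto
    show "(Y has_real_derivative \<kappa> * measure lebesgue \<Omega> - Y s) (at s)" if "0 < s" "s < t" for s
      unfolding Y_def[abs_def] using that t
      by (intro total_mass_has_derivative[OF dom u_nonneg u_C0 v_C0 u_C21 v_C21 u_eq v_eq u_bc v_bc])
        (auto intro: ereal_less_if_le_less[of s t])
  qed (use t in simp)
  moreover have "0 \<le> integral \<Omega> (\<lambda>x. u x t)"
    using u_nonneg t closure_subset[of \<Omega>]
    by (intro integral_nonneg integrable_on_time_slice[OF bounded_domain open_domain u_C0])
      (auto simp: cyl_closed0_def subset_iff)
  ultimately show "integral \<Omega> (\<lambda>x. v x t)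
      \<le> exp (- t) * (integral \<Omega> (\<lambda>x. u x 0) + integral \<Omega> (\<lambda>x. v x 0))
        + \<kappa> * measure lebesgue \<Omega> * (1 - exp (- t))"
    by (simp add: Y_def)
qed

end
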